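(* Let $\lambda>1$ and $\alpha<0$ satisfy $\lambda+2\sqrt\lambda<-\frac1\alpha<(1+\sqrt\lambda)^2$ (so that for all sufficiently large $n$ the hypotheses $\frac1n+2\sqrt\lambda+\lambda<-\frac1\alpha<(1+\sqrt\lambda)^2$ hold). For integers $n,N$ let $X_{nN}=\mathbb{1}_{nN}+\alpha W_{nN}\in\mathcal{M}_n(\mathbb{C})\otimes\mathcal{M}_N(\mathbb{C})$ with $W_{nN}$ an $nN\times nN$ complex Wishart matrix with parameter $\lambda$. Then for every integer $k\ge1$ there exists $n_0$ such that for every $n\ge n_0$, almost surely there exists $N_0$ such that $X_{nN}$ is $k$-block positive for all $N\ge N_0$. Equivalently, the linear map $\Phi_N:\mathcal{M}_n(\mathbb{C})\to\mathcal{M}_N(\mathbb{C})$ whose Choi matrix is $X_{nN}$ is $k$-positive.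
   Context: Complex Wishart matrix with parameter $\lambda$: $W_{nN}=B^*B$ with $B$ a $d\times nN$ matrix of i.i.d. centred complex Gaussian entries of variance $1/(nN)$, $d/(nN)\to\lambda$ as $N\to\infty$. A matrix $X\in\mathcal{M}_n(\mathbb{C})\otimes\mathcal{M}_N(\mathbb{C})$ is $k$-block positive if $(P\otimes\mathbb{1}_N)X(P\otimes\mathbb{1}_N)$ is positive semidefinite for every rank-$k$ orthogonal projection $P\in\mathcal{M}_n(\mathbb{C})$. The Choi matrix of a linear map $\Phi:\mathcal{M}_n(\mathbb{C})\to\mathcal{M}_N(\mathbb{C})$ is $C_\Phi=\sum_{i,j=1}^nE_{ij}\otimes\Phi(E_{ij})$; $\Phi$ is $k$-positive if $\Phi\otimes\mathrm{id}_{\mathcal{M}_k}$ is positive, and $\Phi$ is $k$-positive iff $C_\Phi$ is $k$-block positive. *)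

theory Defs
  imports "HOL-Probability.Probability" "Jordan_Normal_Form.DL_Rank" "Jordan_Normal_Form.Schur_Decomposition"
begin

definition psd_mat :: "nat \<Rightarrow> complex mat \<Rightarrow> bool" where
  "psd_mat m A \<longleftrightarrow> A \<in> carrier_mat m m \<and> mat_adjoint A = A \<and>
     (\<forall>v \<in> carrier_vec m. \<exists>r::real. r \<ge> 0 \<and> (A *\<^sub>v v) \<bullet>c v = complex_of_real r)"

definition orth_proj_rank :: "nat \<Rightarrow> nat \<Rightarrow> complex mat \<Rightarrow> bool" where
  "orth_proj_rank n k P \<longleftrightarrow> P \<in> carrier_mat n n \<and> mat_adjoint P = P \<and> P * P = P
     \<and> vec_space.rank n P = k"

text \<open>P tensor identity_N, for the identification M_n(C) (x) M_N(C) = M_{nN}(C) with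
  basis index (i,a), i<n, a<N, flattened to i*N + a.\<close>
definition tensor_id :: "nat \<Rightarrow> nat \<Rightarrow> complex mat \<Rightarrow> complex mat" where
  "tensor_id n N P = mat (n*N) (n*N)
     (\<lambda>(r,c). if r mod N = c mod N then P $$ (r div N, c div N) else 0)"

definition k_block_positive :: "nat \<Rightarrow> nat \<Rightarrow> nat \<Rightarrow> complex mat \<Rightarrow> bool" where
  "k_block_positive n N k X \<longleftrightarrow>
     (\<forall>P. orth_proj_rank n k P \<longrightarrow> psd_mat (n*N) (tensor_id n N P * X * tensor_id n N P))"

definition complex_gaussian_matrix ::
  "'a measure \<Rightarrow> real \<Rightarrow> nat \<Rightarrow> nat \<Rightarrow> ('a \<Rightarrow> complex mat) \<Rightarrow> bool" where
  "complex_gaussian_matrix M s2 r c B \<longleftrightarrow>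
     (\<forall>\<omega>\<in>space M. B \<omega> \<in> carrier_mat r c) \<and>
     prob_space.indep_vars M (\<lambda>_. borel)
        (\<lambda>(i,j,b) \<omega>. if b then Re (B \<omega> $$ (i,j)) else Im (B \<omega> $$ (i,j)))
        ({..<r} \<times> {..<c} \<times> (UNIV :: bool set)) \<and>
     (\<forall>i<r. \<forall>j<c.
        distributed M lborel (\<lambda>\<omega>. Re (B \<omega> $$ (i,j))) (\<lambda>x. ennreal (normal_density 0 (sqrt (s2/2)) x)) \<and>
        distributed M lborel (\<lambda>\<omega>. Im (B \<omega> $$ (i,j))) (\<lambda>x. ennreal (normal_density 0 (sqrt (s2/2)) x)))"

end

theory Submission
  imports Defs
begin

(* Let c = -1/alpha. For a rank-k projection P, every vector of the range of P (x) 1 has the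
   form w = sum_l u_l (x) f_l with (u_l) orthonormal, and <(P (x) 1) X (P (x) 1) v, v> equals
   |w|^2 - |B w|^2 / c. So X is k-block positive once |B w|^2 <= c |w|^2 for all such w.

   Rounding u and f to grids gives finite nets, and a bound |B y|^2 <= a |y|^2 on the net with
   a < c extends to all w at the cost of a factor (1 + 12 eps sqrt k)^2, because the rounding
   errors are vectors of the same shape. For a fixed y, |B y|^2 is a sum of d independent squared
   moduli of complex Gaussians; once d <= rho n N with lam < rho < a, a Chernoff bound gives failure
   probability exp (- n N kappa). The net has C_n exp (k N (4/eps^2 + ln 16)) points, so for n large
   compared to k the failure probabilities are summable in N and Borel-Cantelli concludes. *)

section \<open>Euclidean norms and sums of elementary tensors\<close>

definition l2norm :: "'i set \<Rightarrow> ('i \<Rightarrow> complex) \<Rightarrow> real" where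
  "l2norm A y = L2_set (\<lambda>j. cmod (y j)) A"

definition image_norm :: "(nat \<Rightarrow> nat \<Rightarrow> complex) \<Rightarrow> nat \<Rightarrow> nat \<Rightarrow> (nat \<Rightarrow> complex) \<Rightarrow> real" where
  "image_norm b d m y = l2norm {..<d} (\<lambda>i. \<Sum>j<m. b i j * y j)"

lemma l2norm_nonneg [simp]: "0 \<le> l2norm A y"
  unfolding l2norm_def by simp

lemma l2norm_cong: "(\<And>j. j \<in> A \<Longrightarrow> y j = z j) \<Longrightarrow> l2norm A y = l2norm A z"
  unfolding l2norm_def by (intro L2_set_cong) auto

lemma l2norm_zero [simp]: "l2norm A (\<lambda>j. 0) = 0"
  unfolding l2norm_def L2_set_def by simp

lemma l2norm_uminus [simp]: "l2norm A (\<lambda>j. - y j) = l2norm A y"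
  unfolding l2norm_def by simp

lemma l2norm_mult: "l2norm A (\<lambda>j. c * y j) = cmod c * l2norm A y"
  unfolding l2norm_def by (simp add: L2_set_right_distrib norm_mult)

lemma l2norm_divide_of_real: "0 \<le> c \<Longrightarrow> l2norm A (\<lambda>j. y j / complex_of_real c) = l2norm A y / c"
  using L2_set_right_distrib[of "1/c" "\<lambda>j. cmod (y j)" A]
  by (simp add: l2norm_def norm_divide)

lemma l2norm_power2: "(l2norm A y)\<^sup>2 = (\<Sum>j\<in>A. (cmod (y j))\<^sup>2)"
  unfolding l2norm_def L2_set_def by (simp add: sum_nonneg)

lemma l2norm_add_le: "l2norm A (\<lambda>j. y j + z j) \<le> l2norm A y + l2norm A z"
proof -
  have "l2norm A (\<lambda>j. y j + z j) \<le> L2_set (\<lambda>j. cmod (y j) + cmod (z j)) A"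
    unfolding l2norm_def by (rule L2_set_mono) (auto intro: norm_triangle_ineq)
  also have "\<dots> \<le> l2norm A y + l2norm A z"
    unfolding l2norm_def by (rule L2_set_triangle_ineq)
  finally show ?thesis .
qed

lemma l2norm_le_add_diff: "l2norm A x \<le> l2norm A y + l2norm A (\<lambda>j. y j - x j)"
proof -
  have "l2norm A x \<le> l2norm A y + l2norm A (\<lambda>j. x j - y j)"
    using l2norm_add_le[of A y "\<lambda>j. x j - y j"] by simp
  also have "l2norm A (\<lambda>j. x j - y j) = l2norm A (\<lambda>j. y j - x j)"
    unfolding l2norm_def by (simp add: norm_minus_commute)
  finally show ?thesis .
qed

lemma l2norm_sum_le: "finite L \<Longrightarrow> l2norm A (\<lambda>j. \<Sum>l\<in>L. g l j) \<le> (\<Sum>l\<in>L. l2norm A (g l))"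
proof (induction L rule: finite_induct)
  case (insert x F)
  have "l2norm A (\<lambda>j. \<Sum>l\<in>insert x F. g l j) = l2norm A (\<lambda>j. g x j + (\<Sum>l\<in>F. g l j))"
    using insert by simp
  also have "\<dots> \<le> l2norm A (g x) + l2norm A (\<lambda>j. \<Sum>l\<in>F. g l j)" by (rule l2norm_add_le)
  also have "\<dots> \<le> l2norm A (g x) + (\<Sum>l\<in>F. l2norm A (g l))" using insert by simp
  finally show ?case using insert by simp
qed simp

lemma cmod_le_l2norm: "finite A \<Longrightarrow> j \<in> A \<Longrightarrow> cmod (y j) \<le> l2norm A y"
  unfolding l2norm_def by (rule member_le_L2_set)

lemma of_real_l2norm_power2: "complex_of_real ((l2norm A y)\<^sup>2) = (\<Sum>j\<in>A. y j * cnj (y j))"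
  by (simp only: l2norm_power2 of_real_sum complex_norm_square)

lemma image_norm_nonneg [simp]: "0 \<le> image_norm b d m y"
  unfolding image_norm_def by simp

lemma image_norm_cong: "(\<And>j. j < m \<Longrightarrow> y j = z j) \<Longrightarrow> image_norm b d m y = image_norm b d m z"
  unfolding image_norm_def by (intro l2norm_cong sum.cong) auto

lemma image_norm_add_le:
  "image_norm b d m (\<lambda>j. y j + z j) \<le> image_norm b d m y + image_norm b d m z"
  unfolding image_norm_def by (simp add: distrib_left sum.distrib l2norm_add_le)

lemma image_norm_mult: "image_norm b d m (\<lambda>j. c * y j) = cmod c * image_norm b d m y"
  unfolding image_norm_def
  by (simp add: l2norm_mult[symmetric] sum_distrib_left ac_simps)

lemma image_norm_le:
  "image_norm b d m y \<le> L2_set (\<lambda>i. l2norm {..<m} (b i)) {..<d} * l2norm {..<m} y"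
proof -
  have "image_norm b d m y \<le> L2_set (\<lambda>i. l2norm {..<m} (b i) * l2norm {..<m} y) {..<d}"
    unfolding image_norm_def l2norm_def[of "{..<d}"]
  proof (rule L2_set_mono)
    fix i
    have "cmod (\<Sum>j<m. b i j * y j) \<le> (\<Sum>j<m. \<bar>cmod (b i j)\<bar> * \<bar>cmod (y j)\<bar>)"
      by (rule order_trans[OF norm_sum]) (simp add: norm_mult)
    also have "\<dots> \<le> l2norm {..<m} (b i) * l2norm {..<m} y"
      unfolding l2norm_def by (rule L2_set_mult_ineq)
    finally show "cmod (\<Sum>j<m. b i j * y j) \<le> l2norm {..<m} (b i) * l2norm {..<m} y" .
  qed simp
  also have "\<dots> = L2_set (\<lambda>i. l2norm {..<m} (b i)) {..<d} * l2norm {..<m} y"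
    by (simp add: L2_set_left_distrib)
  finally show ?thesis .
qed

lemma sum_lessThan_mult_eq:
  fixes g :: "nat \<Rightarrow> 'b::comm_monoid_add"
  shows "(\<Sum>j<n*N. g j) = (\<Sum>i<n. \<Sum>a<N. g (i*N + a))"
proof -
  have "(\<Sum>j<n*N. g j) = (\<Sum>i<n. sum g {i*N..<i*N+N})"
    by (rule sum.nat_group[symmetric])
  also have "\<dots> = (\<Sum>i<n. \<Sum>a<N. g (i*N + a))"
  proof (rule sum.cong[OF refl])
    fix i
    have "sum g {i*N..<i*N+N} = sum g {0+i*N..<N+i*N}" by (simp add: add.commute)
    also have "\<dots> = (\<Sum>a\<in>{0..<N}. g (a + i*N))" by (rule sum.shift_bounds_nat_ivl)
    finally show "sum g {i*N..<i*N+N} = (\<Sum>a<N. g (i*N + a))"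
      by (simp add: atLeast0LessThan add.commute)
  qed
  finally show ?thesis .
qed

lemma sum_lessThan_mult_div_mod:
  fixes g :: "nat \<Rightarrow> nat \<Rightarrow> 'b::comm_monoid_add"
  shows "(\<Sum>j<n*N. g (j div N) (j mod N)) = (\<Sum>i<n. \<Sum>a<N. g i a)"
  unfolding sum_lessThan_mult_eq by (intro sum.cong refl) auto

lemma L2_set_Times: "L2_set (\<lambda>l. L2_set (\<lambda>a. g (l, a)) B) A = L2_set g (A \<times> B)"
proof (cases "finite A \<and> finite B")
  case True
  then show ?thesis unfolding L2_set_def by (simp add: sum_nonneg sum.cartesian_product)
next
  case False
  show ?thesis
  proof (cases "A = {} \<or> B = {}")
    case True then show ?thesis by (auto simp: L2_set_def)
  next
    case nonempty: False
    with False have "infinite (A \<times> B)" by (auto simp: finite_cartesian_product_iff)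
    moreover have "L2_set (\<lambda>l. L2_set (\<lambda>a. g (l, a)) B) A = 0"
      using False nonempty by (cases "finite A") (auto simp: L2_set_def)
    ultimately show ?thesis by simp
  qed
qed

text \<open>Vectors of C^n (x) C^N are functions on indices i * N + a with i < n, a < N, as in
  tensor_id. Then tensor_sum N k u f is the vector sum_l u_l (x) f_l, where u_l = u (l, -) in C^n
  and f_l = f (l, -) in C^N.\<close>

definition tensor_sum ::
  "nat \<Rightarrow> nat \<Rightarrow> (nat \<times> nat \<Rightarrow> complex) \<Rightarrow> (nat \<times> nat \<Rightarrow> complex) \<Rightarrow> nat \<Rightarrow> complex" where
  "tensor_sum N k u f j = (\<Sum>l<k. u (l, j div N) * f (l, j mod N))"

definition orthonormal_rows :: "nat \<Rightarrow> nat \<Rightarrow> (nat \<times> nat \<Rightarrow> complex) \<Rightarrow> bool" where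
  "orthonormal_rows n k u \<longleftrightarrow>
     (\<forall>l<k. \<forall>l'<k. (\<Sum>i<n. u (l,i) * cnj (u (l',i))) = (if l = l' then 1 else 0))"

definition row_norms_le :: "nat \<Rightarrow> nat \<Rightarrow> real \<Rightarrow> (nat \<times> nat \<Rightarrow> complex) \<Rightarrow> bool" where
  "row_norms_le n k r u \<longleftrightarrow> (\<forall>l<k. l2norm {..<n} (\<lambda>i. u (l,i)) \<le> r)"

lemma tensor_sum_mult_right: "tensor_sum N k u (\<lambda>p. c * f p) j = c * tensor_sum N k u f j"
  unfolding tensor_sum_def by (simp add: sum_distrib_left ac_simps)

lemma tensor_sum_split:
  "tensor_sum N k u f j = tensor_sum N k u' f' j + tensor_sum N k (\<lambda>p. u p - u' p) f j
     + tensor_sum N k u' (\<lambda>p. f p - f' p) j"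
  unfolding tensor_sum_def by (simp add: sum.distrib[symmetric] algebra_simps)

lemma l2norm_tensor_product:
  fixes x y :: "nat \<Rightarrow> complex"
  shows "l2norm {..<n*N} (\<lambda>j. x (j div N) * y (j mod N)) = l2norm {..<n} x * l2norm {..<N} y"
proof -
  have "(\<Sum>j<n*N. (cmod (x (j div N) * y (j mod N)))\<^sup>2)
      = (\<Sum>i<n. \<Sum>a<N. (cmod (x i))\<^sup>2 * (cmod (y a))\<^sup>2)"
    using sum_lessThan_mult_div_mod[where g="\<lambda>i a. (cmod (x i) * cmod (y a))\<^sup>2" and n=n and N=N]
    by (simp add: norm_mult power_mult_distrib)
  also have "\<dots> = (\<Sum>i<n. (cmod (x i))\<^sup>2) * (\<Sum>a<N. (cmod (y a))\<^sup>2)"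
    by (simp add: sum_product)
  finally show ?thesis unfolding l2norm_def L2_set_def by (simp add: real_sqrt_mult)
qed

lemma l2norm_tensor_sum_le:
  assumes "row_norms_le n k U u"
  shows "l2norm {..<n*N} (tensor_sum N k u f) \<le> U * sqrt k * l2norm ({..<k} \<times> {..<N}) f"
proof -
  have U: "l2norm {..<n} (\<lambda>i. u (l,i)) \<le> U" if "l < k" for l
    using assms that unfolding row_norms_le_def by blast
  have U0: "k > 0 \<Longrightarrow> 0 \<le> U" using U[of 0] l2norm_nonneg order_trans by blast
  define F where "F l = l2norm {..<N} (\<lambda>a. f (l,a))" for l
  have "l2norm {..<n*N} (tensor_sum N k u f)
      \<le> (\<Sum>l<k. l2norm {..<n*N} (\<lambda>j. u (l, j div N) * f (l, j mod N)))"
    unfolding tensor_sum_def by (rule l2norm_sum_le) simp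
  also have "\<dots> = (\<Sum>l<k. l2norm {..<n} (\<lambda>i. u (l,i)) * F l)"
    unfolding F_def by (rule sum.cong[OF refl], rule l2norm_tensor_product)
  also have "\<dots> \<le> (\<Sum>l<k. U * F l)"
    by (intro sum_mono mult_right_mono U) (auto simp: F_def)
  also have "\<dots> = U * (\<Sum>l<k. \<bar>1\<bar> * \<bar>F l\<bar>)"
    by (simp add: sum_distrib_left F_def)
  also have "\<dots> \<le> U * (L2_set (\<lambda>l. 1) {..<k} * L2_set F {..<k})"
    using L2_set_mult_ineq[of "\<lambda>l. 1" F "{..<k}"]
    by (cases "k = 0") (auto intro!: mult_left_mono U0)
  also have "L2_set F {..<k} = l2norm ({..<k} \<times> {..<N}) f"
    unfolding F_def l2norm_def by (rule L2_set_Times[of "\<lambda>p. cmod (f p)"])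
  also have "L2_set (\<lambda>l. 1) {..<k} = sqrt k"
    by (simp add: L2_set_constant)
  finally show ?thesis by (simp add: mult.assoc)
qed

lemma l2norm_tensor_sum_orthonormal:
  assumes "orthonormal_rows n k u"
  shows "l2norm {..<n*N} (tensor_sum N k u f) = l2norm ({..<k} \<times> {..<N}) f"
proof -
  have "complex_of_real ((l2norm {..<n*N} (tensor_sum N k u f))\<^sup>2)
      = (\<Sum>i<n. \<Sum>a<N. (\<Sum>l<k. u (l, i) * f (l, a)) * cnj (\<Sum>l<k. u (l, i) * f (l, a)))"
    unfolding of_real_l2norm_power2 tensor_sum_def
    by (rule sum_lessThan_mult_div_mod[where g="\<lambda>i a. (\<Sum>l<k. u (l, i) * f (l, a)) * cnj (\<Sum>l<k. u (l, i) * f (l, a))"])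
  also have "\<dots> = (\<Sum>a<N. \<Sum>l<k. \<Sum>l'<k. f (l,a) * cnj (f (l',a)) * (\<Sum>i<n. u (l,i) * cnj (u (l',i))))"
    by (simp add: sum_distrib_left sum_distrib_right sum_product cnj_sum sum.swap[of _ "{..<n}"] algebra_simps)
       (rule sum.cong[OF refl], rule sum.cong[OF refl], rule sum.swap)
  also have "\<dots> = (\<Sum>a<N. \<Sum>l<k. f (l,a) * cnj (f (l,a)))"
  proof (intro sum.cong refl)
    fix a l assume l: "l \<in> {..<k}"
    have "(\<Sum>l'<k. f (l,a) * cnj (f (l',a)) * (\<Sum>i<n. u (l,i) * cnj (u (l',i))))
        = (\<Sum>l'<k. if l = l' then f (l,a) * cnj (f (l,a)) else 0)"
      using assms l unfolding orthonormal_rows_def by (intro sum.cong refl) auto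
    then show "(\<Sum>l'<k. f (l,a) * cnj (f (l',a)) * (\<Sum>i<n. u (l,i) * cnj (u (l',i))))
        = f (l,a) * cnj (f (l,a))" using l by simp
  qed
  also have "\<dots> = complex_of_real ((l2norm ({..<k} \<times> {..<N}) f)\<^sup>2)"
    unfolding of_real_l2norm_power2 sum.cartesian_product' by (rule sum.swap)
  finally have "(l2norm {..<n*N} (tensor_sum N k u f))\<^sup>2 = (l2norm ({..<k} \<times> {..<N}) f)\<^sup>2"
    by (simp only: of_real_eq_iff)
  then show ?thesis by (simp add: power2_eq_iff_nonneg)
qed

lemma l2norm_row_orthonormal:
  assumes "orthonormal_rows n k u" "l < k"
  shows "l2norm {..<n} (\<lambda>i. u (l,i)) = 1"
proof -
  have "complex_of_real ((l2norm {..<n} (\<lambda>i. u (l,i)))\<^sup>2) = 1"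
    using assms unfolding of_real_l2norm_power2 orthonormal_rows_def by auto
  then have "(l2norm {..<n} (\<lambda>i. u (l,i)))\<^sup>2 = 1\<^sup>2"
    by (simp only: of_real_eq_1_iff power_one)
  then show ?thesis
    using l2norm_nonneg[of "{..<n}" "\<lambda>i. u (l,i)"] by (auto simp: power2_eq_1_iff)
qed

lemma row_norms_le_orthonormal: "orthonormal_rows n k u \<Longrightarrow> row_norms_le n k 1 u"
  by (simp add: row_norms_le_def l2norm_row_orthonormal)

section \<open>Grids and finite nets\<close>

definition grid :: "real \<Rightarrow> complex set" where
  "grid h = {complex_of_real h * Complex (of_int x) (of_int y) | x y. True}"

definition grid_round :: "real \<Rightarrow> complex \<Rightarrow> complex" where
  "grid_round h z = complex_of_real h * Complex (of_int (round (Re z / h))) (of_int (round (Im z / h)))"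

lemma grid_round_in_grid: "grid_round h z \<in> grid h"
  unfolding grid_round_def grid_def by blast

definition grid_coords :: "real \<Rightarrow> complex \<Rightarrow> int \<times> int" where
  "grid_coords h z = (round (Re z / h), round (Im z / h))"

definition norm2_int :: "int \<times> int \<Rightarrow> real" where
  "norm2_int w = (real_of_int (fst w))\<^sup>2 + (real_of_int (snd w))\<^sup>2"

lemma grid_coords_grid_point:
  "0 < h \<Longrightarrow> grid_coords h (complex_of_real h * Complex (of_int x) (of_int y)) = (x, y)"
  by (simp add: grid_coords_def)

lemma inj_on_grid_coords: "0 < h \<Longrightarrow> inj_on (grid_coords h) (grid h)"
  by (auto simp: inj_on_def grid_def grid_coords_grid_point)

lemma norm2_int_grid_coords:
  "0 < h \<Longrightarrow> z \<in> grid h \<Longrightarrow> norm2_int (grid_coords h z) = (cmod z)\<^sup>2 / h\<^sup>2"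
  by (auto simp: grid_def grid_coords_grid_point norm2_int_def cmod_power2 power_mult_distrib field_simps)

lemma grid_coords_in_box:
  assumes "0 < h" "z \<in> grid h" "cmod z \<le> 2"
  shows "grid_coords h z \<in> {-\<lceil>2/h\<rceil>..\<lceil>2/h\<rceil>} \<times> {-\<lceil>2/h\<rceil>..\<lceil>2/h\<rceil>}"
proof -
  obtain x y where z: "z = complex_of_real h * Complex (of_int x) (of_int y)"
    using assms(2) unfolding grid_def by blast
  have "\<bar>Re z\<bar> \<le> 2" "\<bar>Im z\<bar> \<le> 2"
    using assms(3) abs_Re_le_cmod abs_Im_le_cmod order_trans by blast+
  then have "h * \<bar>of_int x\<bar> \<le> 2" "h * \<bar>of_int y\<bar> \<le> 2" using assms(1) z by (simp_all add: abs_mult)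
  then have "\<bar>of_int x\<bar> \<le> 2/h" "\<bar>of_int y\<bar> \<le> 2/h" using assms(1) by (simp_all add: field_simps)
  then have "\<bar>x\<bar> \<le> \<lceil>2/h\<rceil>" "\<bar>y\<bar> \<le> \<lceil>2/h\<rceil>"
    by (metis of_int_abs of_int_le_iff le_of_int_ceiling order_trans)+
  then show ?thesis using assms(1) by (simp add: z grid_coords_grid_point abs_le_iff)
qed

lemma round_error_power2: "0 < h \<Longrightarrow> (x - h * of_int (round (x / h)))\<^sup>2 \<le> h\<^sup>2 / 4"
proof -
  assume h: "0 < h"
  have "\<bar>of_int (round (x / h)) - x / h\<bar> \<le> 1/2" by (rule of_int_round_abs_le)
  moreover have "x - h * of_int (round (x / h)) = h * (x / h - of_int (round (x / h)))"
    using h by (simp add: algebra_simps)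
  ultimately have "\<bar>x - h * of_int (round (x / h))\<bar> \<le> h / 2"
    using h by (simp add: abs_mult abs_minus_commute)
  then have "\<bar>x - h * of_int (round (x / h))\<bar>\<^sup>2 \<le> (h/2)\<^sup>2"
    by (rule power_mono) simp
  then show ?thesis by (simp add: power_divide)
qed

lemma cmod_sub_grid_round_power2: "0 < h \<Longrightarrow> (cmod (z - grid_round h z))\<^sup>2 \<le> h\<^sup>2 / 2"
proof -
  assume h: "0 < h"
  have "(cmod (z - grid_round h z))\<^sup>2
      = (Re z - h * of_int (round (Re z / h)))\<^sup>2 + (Im z - h * of_int (round (Im z / h)))\<^sup>2"
    unfolding grid_round_def cmod_power2 by simp
  also have "\<dots> \<le> h\<^sup>2/4 + h\<^sup>2/4" by (intro add_mono round_error_power2 h)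
  finally show ?thesis by simp
qed

lemma l2norm_sub_grid_round_le:
  assumes "finite A" "0 < h" "real (card A) * h\<^sup>2 \<le> 2 * e\<^sup>2" "0 \<le> e"
  shows "l2norm A (\<lambda>p. g p - grid_round h (g p)) \<le> e"
proof -
  have "(l2norm A (\<lambda>p. g p - grid_round h (g p)))\<^sup>2 \<le> (\<Sum>p\<in>A. h\<^sup>2/2)"
    unfolding l2norm_power2 by (intro sum_mono cmod_sub_grid_round_power2 assms)
  also have "\<dots> \<le> e\<^sup>2" using assms(3) by simp
  finally show ?thesis using assms(4) power2_le_imp_le by blast
qed

text \<open>Net elements vanish outside the index range, so that the nets are finite sets.\<close>

definition row_net :: "nat \<Rightarrow> nat \<Rightarrow> real \<Rightarrow> (nat \<times> nat \<Rightarrow> complex) set" where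
  "row_net n k \<epsilon> = {u. \<forall>p. (p \<in> {..<k}\<times>{..<n} \<longrightarrow> u p \<in> grid (\<epsilon> / sqrt n) \<and> cmod (u p) \<le> 2)
                        \<and> (p \<notin> {..<k}\<times>{..<n} \<longrightarrow> u p = 0)}"

definition coef_net :: "nat \<Rightarrow> nat \<Rightarrow> real \<Rightarrow> (nat \<times> nat \<Rightarrow> complex) set" where
  "coef_net N k \<epsilon> = {f. (\<forall>p. (p \<in> {..<k}\<times>{..<N} \<longrightarrow> f p \<in> grid (\<epsilon> / sqrt (k*N)))
                          \<and> (p \<notin> {..<k}\<times>{..<N} \<longrightarrow> f p = 0))
                        \<and> l2norm ({..<k}\<times>{..<N}) f \<le> 2}"

lemma finite_row_net:
  assumes "0 < \<epsilon>" "n > 0"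
  shows "finite (row_net n k \<epsilon>)"
proof -
  define h where "h = \<epsilon> / sqrt n"
  have h: "0 < h" unfolding h_def using assms by simp
  define Box where "Box = {-\<lceil>2/h\<rceil>..\<lceil>2/h\<rceil>} \<times> {-\<lceil>2/h\<rceil>..\<lceil>2/h\<rceil>}"
  define V where "V = {z \<in> grid h. grid_coords h z \<in> Box}"
  define Fs where "Fs = {u. \<forall>p. (p \<in> {..<k}\<times>{..<n} \<longrightarrow> u p \<in> V) \<and> (p \<notin> {..<k}\<times>{..<n} \<longrightarrow> u p = 0)}"
  have "finite (grid_coords h ` V)" by (rule finite_subset[of _ Box]) (auto simp: V_def Box_def)
  then have "finite V"
    by (rule finite_imageD) (rule inj_on_subset[OF inj_on_grid_coords[OF h]], auto simp: V_def)
  then have "finite Fs" unfolding Fs_def by (intro finite_set_of_finite_funs) auto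
  moreover have "row_net n k \<epsilon> \<subseteq> Fs"
    using grid_coords_in_box[OF h] unfolding row_net_def Fs_def V_def Box_def h_def by blast
  ultimately show ?thesis by (rule finite_subset[rotated])
qed

lemma exp_neg_power2_le: "exp (- (real_of_int x)\<^sup>2) \<le> (1/2) ^ nat \<bar>x\<bar>"
proof -
  have "real_of_int \<bar>x\<bar> \<le> (real_of_int x)\<^sup>2"
  proof (cases "x = 0")
    case False
    then have "\<bar>x\<bar> * 1 \<le> \<bar>x\<bar> * \<bar>x\<bar>" by (intro mult_left_mono) auto
    then show ?thesis by (simp add: power2_eq_square flip: of_int_mult)
  qed simp
  then have "exp (- (real_of_int x)\<^sup>2) \<le> exp (- real_of_int \<bar>x\<bar>)" by simp
  also have "exp (- real_of_int \<bar>x\<bar>) = (exp (-1)) ^ nat \<bar>x\<bar>"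
    by (simp add: exp_of_nat_mult[symmetric])
  also have "\<dots> \<le> (1/2) ^ nat \<bar>x\<bar>"
  proof (rule power_mono)
    have "2 \<le> exp (1::real)" using exp_ge_add_one_self[of 1] by simp
    then show "exp (-1) \<le> (1/2::real)" by (simp add: exp_minus field_simps)
  qed simp
  finally show ?thesis .
qed

lemma sum_half_power_abs_le: "(\<Sum>x\<in>{-T..T}. (1/2::real) ^ nat \<bar>x\<bar>) \<le> 4"
proof -
  define A where "A = int ` {..<Suc (nat T)}"
  define B where "B = (\<lambda>j. - int j) ` {..<Suc (nat T)}"
  have sub: "{-T..T} \<subseteq> A \<union> B"
  proof
    fix x assume x: "x \<in> {-T..T}"
    show "x \<in> A \<union> B"
    proof (cases "0 \<le> x")
      case True then have "x = int (nat x)" "nat x < Suc (nat T)" using x by auto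
      then show ?thesis unfolding A_def by blast
    next
      case False then have "x = - int (nat (-x))" "nat (-x) < Suc (nat T)" using x by auto
      then show ?thesis unfolding B_def by blast
    qed
  qed
  have fin: "finite A" "finite B" unfolding A_def B_def by auto
  have "(\<Sum>x\<in>{-T..T}. (1/2::real) ^ nat \<bar>x\<bar>) \<le> (\<Sum>x\<in>A \<union> B. (1/2::real) ^ nat \<bar>x\<bar>)"
    by (rule sum_mono2) (use fin sub in auto)
  also have "\<dots> \<le> (\<Sum>x\<in>A. (1/2::real) ^ nat \<bar>x\<bar>) + (\<Sum>x\<in>B. (1/2::real) ^ nat \<bar>x\<bar>)"
    using sum.union_inter[OF fin, of "\<lambda>x. (1/2::real) ^ nat \<bar>x\<bar>"]
      sum_nonneg[of "A \<inter> B" "\<lambda>x. (1/2::real) ^ nat \<bar>x\<bar>"] by simp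
  also have "(\<Sum>x\<in>A. (1/2::real) ^ nat \<bar>x\<bar>) = (\<Sum>j<Suc (nat T). (1/2::real) ^ j)"
    unfolding A_def by (subst sum.reindex) (auto simp: inj_on_def)
  also have "(\<Sum>x\<in>B. (1/2::real) ^ nat \<bar>x\<bar>) = (\<Sum>j<Suc (nat T). (1/2::real) ^ j)"
    unfolding B_def by (subst sum.reindex) (auto simp: inj_on_def)
  also have "(\<Sum>j<Suc (nat T). (1/2::real) ^ j) \<le> 2"
    by (simp add: sum_gp_strict)
  finally show ?thesis by simp
qed

lemma sum_exp_neg_norm2_int_le: "(\<Sum>w\<in>{-T..T}\<times>{-T..T}. exp (- norm2_int w)) \<le> 16"
proof -
  have s: "(\<Sum>x\<in>{-T..T}. exp (- (real_of_int x)\<^sup>2)) \<le> 4"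
    using sum_mono[of "{-T..T}" "\<lambda>x. exp (- (real_of_int x)\<^sup>2)" "\<lambda>x. (1/2::real) ^ nat \<bar>x\<bar>"]
      exp_neg_power2_le sum_half_power_abs_le[of T] by (meson order_trans)
  have "(\<Sum>w\<in>{-T..T}\<times>{-T..T}. exp (- norm2_int w))
      = (\<Sum>x\<in>{-T..T}. exp (- (real_of_int x)\<^sup>2)) * (\<Sum>y\<in>{-T..T}. exp (- (real_of_int y)\<^sup>2))"
    by (simp add: norm2_int_def sum_product sum.cartesian_product' exp_add[symmetric])
  also have "\<dots> \<le> 4 * 4" using s by (intro mult_mono) (auto intro: sum_nonneg)
  finally show ?thesis by simp
qed

text \<open>Each lattice point z of the ball contributes at least 1 to
  exp R * prod_p exp (- |z p|^2), and the sum of the latter over the whole box factorises.\<close>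

lemma card_int_points_ball_le:
  assumes I: "finite I"
  shows "real (card {z \<in> PiE I (\<lambda>_. {-T..T}\<times>{-T..T}). (\<Sum>p\<in>I. norm2_int (z p)) \<le> R})
           \<le> exp R * 16 ^ card I"
proof -
  define Box where "Box = {-T..T}\<times>{-T..T}"
  define Zs where "Zs = {z \<in> PiE I (\<lambda>_. Box). (\<Sum>p\<in>I. norm2_int (z p)) \<le> R}"
  have finBox: "finite Box" unfolding Box_def by simp
  have finPi: "finite (PiE I (\<lambda>_. Box))" using I finBox by (auto intro!: finite_PiE)
  have "real (card Zs) = (\<Sum>z\<in>Zs. 1)" by simp
  also have "\<dots> \<le> (\<Sum>z\<in>Zs. exp R * (\<Prod>p\<in>I. exp (- norm2_int (z p))))"
  proof (rule sum_mono)
    fix z assume z: "z \<in> Zs"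
    have "exp R * (\<Prod>p\<in>I. exp (- norm2_int (z p))) = exp (R - (\<Sum>p\<in>I. norm2_int (z p)))"
    proof -
      have "(\<Prod>p\<in>I. exp (- norm2_int (z p))) = exp (- (\<Sum>p\<in>I. norm2_int (z p)))"
        using exp_sum[OF I, of "\<lambda>p. - norm2_int (z p)"] by (simp add: sum_negf)
      then show ?thesis by (simp add: mult_exp_exp)
    qed
    also have "\<dots> \<ge> 1" using z unfolding Zs_def by simp
    finally show "1 \<le> exp R * (\<Prod>p\<in>I. exp (- norm2_int (z p)))" .
  qed
  also have "\<dots> \<le> (\<Sum>z\<in>PiE I (\<lambda>_. Box). exp R * (\<Prod>p\<in>I. exp (- norm2_int (z p))))"
    by (rule sum_mono2[OF finPi]) (auto simp: Zs_def intro!: mult_nonneg_nonneg prod_nonneg)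
  also have "\<dots> = exp R * (\<Prod>p\<in>I. \<Sum>w\<in>Box. exp (- norm2_int w))"
    by (simp only: prod_sum_PiE[OF I finBox] sum_distrib_left)
  also have "\<dots> \<le> exp R * (\<Prod>p\<in>I. 16)"
    using sum_exp_neg_norm2_int_le[of T]
    by (intro mult_left_mono prod_mono) (auto simp: Box_def intro: sum_nonneg)
  finally show ?thesis by (simp add: Zs_def Box_def)
qed

lemma card_coef_net:
  assumes eps: "0 < \<epsilon>" and nN: "N > 0" "k > 0"
  shows "finite (coef_net N k \<epsilon>)"
    and "real (card (coef_net N k \<epsilon>)) \<le> exp (4 * real (k*N) / \<epsilon>\<^sup>2) * 16 ^ (k*N)"
proof -
  define \<delta> where "\<delta> = \<epsilon> / sqrt (k*N)"
  have \<delta>: "0 < \<delta>" unfolding \<delta>_def using eps nN by simp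
  define I where "I = {..<k}\<times>{..<N}"
  define T where "T = \<lceil>2/\<delta>\<rceil>"
  define \<phi> where "\<phi> f = restrict (\<lambda>p. grid_coords \<delta> (f p)) I" for f :: "nat\<times>nat \<Rightarrow> complex"
  define Zs where "Zs = {z \<in> PiE I (\<lambda>_. {-T..T}\<times>{-T..T}). (\<Sum>p\<in>I. norm2_int (z p)) \<le> 4/\<delta>\<^sup>2}"
  have I: "finite I" "card I = k*N" unfolding I_def by (auto simp: card_cartesian_product)
  have finZ: "finite Zs" unfolding Zs_def
    by (rule finite_subset[of _ "PiE I (\<lambda>_. {-T..T}\<times>{-T..T})"]) (use I in \<open>auto intro: finite_PiE\<close>)
  have L2: "l2norm I f \<le> 2" if "f \<in> coef_net N k \<epsilon>" for f
    using that unfolding coef_net_def I_def by auto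
  have f: "f p \<in> grid \<delta>" "cmod (f p) \<le> 2" if "f \<in> coef_net N k \<epsilon>" "p \<in> I" for f p
    using that L2[OF that(1)] cmod_le_l2norm[OF I(1) that(2), of f]
    unfolding coef_net_def I_def \<delta>_def by auto
  have img: "\<phi> ` coef_net N k \<epsilon> \<subseteq> Zs"
  proof (rule image_subsetI)
    fix f assume f': "f \<in> coef_net N k \<epsilon>"
    have "(\<Sum>p\<in>I. norm2_int (\<phi> f p)) = (\<Sum>p\<in>I. (cmod (f p))\<^sup>2 / \<delta>\<^sup>2)"
      by (intro sum.cong refl) (simp add: \<phi>_def norm2_int_grid_coords[OF \<delta> f(1)[OF f']])
    also have "\<dots> = (l2norm I f)\<^sup>2 / \<delta>\<^sup>2" by (simp add: l2norm_power2 sum_divide_distrib)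
    also have "\<dots> \<le> 2\<^sup>2 / \<delta>\<^sup>2"
      using L2[OF f'] by (intro divide_right_mono power_mono) auto
    finally show "\<phi> f \<in> Zs"
      using grid_coords_in_box[OF \<delta> f(1,2)[OF f']] unfolding Zs_def T_def by (auto simp: \<phi>_def)
  qed
  have inj: "inj_on \<phi> (coef_net N k \<epsilon>)"
  proof (rule inj_onI, rule ext)
    fix f g p assume fg: "f \<in> coef_net N k \<epsilon>" "g \<in> coef_net N k \<epsilon>" and "\<phi> f = \<phi> g"
    then have eq: "grid_coords \<delta> (f p) = grid_coords \<delta> (g p)" if "p \<in> I"
      using that by (metis \<phi>_def restrict_apply')
    show "f p = g p"
    proof (cases "p \<in> I")
      case True
      then show ?thesis
        using inj_onD[OF inj_on_grid_coords[OF \<delta>] _ f(1)[OF fg(1) True] f(1)[OF fg(2) True]] eq by blast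
    next
      case False
      then show ?thesis using fg unfolding coef_net_def I_def by (cases p) auto
    qed
  qed
  then show "finite (coef_net N k \<epsilon>)" using img finZ by (meson finite_imageD finite_subset)
  have "real (card (coef_net N k \<epsilon>)) \<le> real (card Zs)"
    using card_mono[OF finZ img] inj by (simp add: card_image)
  also have "\<dots> \<le> exp (4/\<delta>\<^sup>2) * 16 ^ card I"
    unfolding Zs_def by (rule card_int_points_ball_le[OF I(1)])
  also have "\<dots> = exp (4 * real (k*N) / \<epsilon>\<^sup>2) * 16 ^ (k*N)"
    using I nN eps by (simp add: \<delta>_def power_divide)
  finally show "real (card (coef_net N k \<epsilon>)) \<le> exp (4 * real (k*N) / \<epsilon>\<^sup>2) * 16 ^ (k*N)" .
qed

section \<open>Extending a bound from the nets\<close>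

lemma net_rounding:
  assumes eps: "0 < \<epsilon>" "\<epsilon> \<le> 1" and nN: "n > 0" "N > 0" "k > 0"
    and u: "row_norms_le n k 1 u" and f: "l2norm ({..<k}\<times>{..<N}) f \<le> 1"
  obtains u' f' where "u' \<in> row_net n k \<epsilon>" "f' \<in> coef_net N k \<epsilon>"
    "row_norms_le n k \<epsilon> (\<lambda>p. u p - u' p)" "row_norms_le n k 2 u'"
    "l2norm ({..<k}\<times>{..<N}) (\<lambda>p. f p - f' p) \<le> \<epsilon>"
proof -
  define I where "I = {..<k}\<times>{..<N}"
  define h where "h = \<epsilon> / sqrt n"
  define \<delta> where "\<delta> = \<epsilon> / sqrt (k*N)"
  have h0: "0 < h" and d0: "0 < \<delta>" unfolding h_def \<delta>_def using eps nN by simp_all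
  define u' where "u' p = (if p \<in> {..<k}\<times>{..<n} then grid_round h (u p) else 0)" for p
  define f' where "f' p = (if p \<in> I then grid_round \<delta> (f p) else 0)" for p
  have du: "l2norm {..<n} (\<lambda>i. u (l,i) - u' (l,i)) \<le> \<epsilon>" if l: "l < k" for l
  proof -
    have "l2norm {..<n} (\<lambda>i. u (l,i) - u' (l,i)) = l2norm {..<n} (\<lambda>i. u (l,i) - grid_round h (u (l,i)))"
      using l by (intro l2norm_cong) (auto simp: u'_def)
    also have "\<dots> \<le> \<epsilon>"
      by (rule l2norm_sub_grid_round_le) (use eps nN h0 in \<open>auto simp: h_def power_divide\<close>)
    finally show ?thesis .
  qed
  have df: "l2norm I (\<lambda>p. f p - f' p) \<le> \<epsilon>"
  proof -
    have "l2norm I (\<lambda>p. f p - f' p) = l2norm I (\<lambda>p. f p - grid_round \<delta> (f p))"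
      by (intro l2norm_cong) (auto simp: f'_def)
    also have "\<dots> \<le> \<epsilon>"
      by (rule l2norm_sub_grid_round_le) (use eps nN d0 in \<open>auto simp: \<delta>_def I_def power_divide\<close>)
    finally show ?thesis .
  qed
  have u'_le: "l2norm {..<n} (\<lambda>i. u' (l,i)) \<le> 2" if l: "l < k" for l
  proof -
    have "l2norm {..<n} (\<lambda>i. u (l,i)) \<le> 1" using u l unfolding row_norms_le_def by blast
    then show ?thesis
      using l2norm_le_add_diff[of "{..<n}" "\<lambda>i. u' (l,i)" "\<lambda>i. u (l,i)"] du[OF l] eps by linarith
  qed
  have f'_le: "l2norm I f' \<le> 2"
    using l2norm_le_add_diff[of I f' f] df f eps unfolding I_def by simp
  have "u' \<in> row_net n k \<epsilon>"
    unfolding row_net_def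
  proof (intro CollectI allI conjI impI)
    fix p :: "nat \<times> nat" assume p: "p \<in> {..<k}\<times>{..<n}"
    then show "u' p \<in> grid (\<epsilon> / sqrt n)" by (simp add: u'_def h_def grid_round_in_grid)
    obtain l i where p': "p = (l,i)" "l < k" "i < n" using p by auto
    have "cmod (u' p) \<le> cmod (u p) + cmod (u p - u' p)"
      by (metis norm_minus_commute norm_triangle_sub)
    also have "cmod (u p) \<le> 1"
      using cmod_le_l2norm[of "{..<n}" i "\<lambda>i. u (l,i)"] u p' unfolding row_norms_le_def by fastforce
    also have "cmod (u p - u' p) \<le> \<epsilon>"
      using cmod_le_l2norm[of "{..<n}" i "\<lambda>i. u (l,i) - u' (l,i)"] du[of l] p' by auto
    finally show "cmod (u' p) \<le> 2" using eps by linarith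
  qed (simp add: u'_def)
  moreover have "f' \<in> coef_net N k \<epsilon>"
    unfolding coef_net_def using f'_le by (auto simp: f'_def I_def \<delta>_def grid_round_in_grid)
  ultimately show ?thesis
    using that du u'_le df unfolding row_norms_le_def I_def by blast
qed

lemma image_norm_tensor_sum_le_scaled:
  assumes r: "0 < r" "row_norms_le n k r u" and s: "0 < s" "l2norm ({..<k}\<times>{..<N}) f \<le> s"
    and S: "\<And>u f. row_norms_le n k 1 u \<Longrightarrow> l2norm ({..<k}\<times>{..<N}) f \<le> 1 \<Longrightarrow>
              image_norm b d (n*N) (tensor_sum N k u f) \<le> S"
  shows "image_norm b d (n*N) (tensor_sum N k u f) \<le> r * s * S"
proof -
  define u1 where "u1 p = u p / complex_of_real r" for p
  define f1 where "f1 p = f p / complex_of_real s" for p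
  have u1: "row_norms_le n k 1 u1"
    using r unfolding row_norms_le_def u1_def by (simp add: l2norm_divide_of_real)
  have f1: "l2norm ({..<k}\<times>{..<N}) f1 \<le> 1"
    using s unfolding f1_def by (simp add: l2norm_divide_of_real)
  have "tensor_sum N k u f = (\<lambda>j. complex_of_real (r * s) * tensor_sum N k u1 f1 j)"
    using r s by (intro ext) (simp add: tensor_sum_def u1_def f1_def sum_distrib_left field_simps)
  then have "image_norm b d (n*N) (tensor_sum N k u f) = r * s * image_norm b d (n*N) (tensor_sum N k u1 f1)"
    using r s by (simp add: image_norm_mult norm_mult)
  also have "\<dots> \<le> r * s * S" using S[OF u1 f1] r s by simp
  finally show ?thesis .
qed

text \<open>Rounding u and f to the nets leaves the error terms tensor_sum (u - u') f and
  tensor_sum u' (f - f'), which are again of the same shape, so the bound S on the unit balls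
  applies to them.\<close>

lemma image_norm_tensor_sum_le_net:
  assumes eps: "0 < \<epsilon>" "\<epsilon> \<le> 1" and a: "0 \<le> a" and nN: "n > 0" "N > 0" "k > 0"
    and net: "\<And>u f. u \<in> row_net n k \<epsilon> \<Longrightarrow> f \<in> coef_net N k \<epsilon> \<Longrightarrow>
              image_norm b d (n*N) (tensor_sum N k u f) \<le> sqrt a * l2norm {..<n*N} (tensor_sum N k u f)"
    and S: "\<And>u f. row_norms_le n k 1 u \<Longrightarrow> l2norm ({..<k}\<times>{..<N}) f \<le> 1 \<Longrightarrow>
              image_norm b d (n*N) (tensor_sum N k u f) \<le> S"
    and u: "row_norms_le n k 1 u" and f: "l2norm ({..<k}\<times>{..<N}) f \<le> 1"
  shows "image_norm b d (n*N) (tensor_sum N k u f)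
           \<le> sqrt a * (l2norm {..<n*N} (tensor_sum N k u f) + 3 * sqrt k * \<epsilon>) + 3 * \<epsilon> * S"
proof -
  obtain u' f' where u': "u' \<in> row_net n k \<epsilon>" "row_norms_le n k 2 u'"
    and f': "f' \<in> coef_net N k \<epsilon>"
    and du: "row_norms_le n k \<epsilon> (\<lambda>p. u p - u' p)"
    and df: "l2norm ({..<k}\<times>{..<N}) (\<lambda>p. f p - f' p) \<le> \<epsilon>"
    using net_rounding[OF eps nN u f] by blast
  define m where "m = n*N"
  define t0 where "t0 = tensor_sum N k u f"
  define t1 where "t1 = tensor_sum N k u' f'"
  define t2 where "t2 = tensor_sum N k (\<lambda>p. u p - u' p) f"
  define t3 where "t3 = tensor_sum N k u' (\<lambda>p. f p - f' p)"
  have split: "t0 j = t1 j + t2 j + t3 j" for j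
    unfolding t0_def t1_def t2_def t3_def by (rule tensor_sum_split)
  have t0_eq: "t0 = (\<lambda>j. t1 j + t2 j + t3 j)" by (rule ext) (rule split)
  have "image_norm b d m t0 \<le> image_norm b d m (\<lambda>j. t1 j + t2 j) + image_norm b d m t3"
    unfolding t0_eq by (rule image_norm_add_le)
  also have "\<dots> \<le> image_norm b d m t1 + image_norm b d m t2 + image_norm b d m t3"
    using image_norm_add_le[of b d m t1 t2] by simp
  also have "image_norm b d m t1 \<le> sqrt a * l2norm {..<m} t1"
    using net[OF u'(1) f'] unfolding t1_def m_def .
  also have "image_norm b d m t2 \<le> \<epsilon> * 1 * S"
    unfolding t2_def m_def by (rule image_norm_tensor_sum_le_scaled[OF eps(1) du _ f S]) auto
  also have "image_norm b d m t3 \<le> 2 * \<epsilon> * S"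
    unfolding t3_def m_def by (rule image_norm_tensor_sum_le_scaled[OF _ u'(2) eps(1) df S]) auto
  also have "l2norm {..<m} t1 \<le> l2norm {..<m} t0 + 3 * sqrt k * \<epsilon>"
  proof -
    have "l2norm {..<m} t2 \<le> \<epsilon> * sqrt k * 1"
      unfolding t2_def m_def
      by (rule order_trans[OF l2norm_tensor_sum_le[OF du]]) (use f eps in \<open>simp add: mult_left_le\<close>)
    moreover have "l2norm {..<m} t3 \<le> 2 * sqrt k * \<epsilon>"
      unfolding t3_def m_def
      by (rule order_trans[OF l2norm_tensor_sum_le[OF u'(2)]]) (use df in \<open>simp add: mult_left_mono\<close>)
    moreover have "l2norm {..<m} t1 \<le> l2norm {..<m} t0 + l2norm {..<m} t2 + l2norm {..<m} t3"
      using l2norm_add_le[of "{..<m}" "\<lambda>j. t0 j + - t2 j" "\<lambda>j. - t3 j"]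
        l2norm_add_le[of "{..<m}" t0 "\<lambda>j. - t2 j"] split
      by (simp add: algebra_simps)
    moreover have "\<epsilon> * sqrt k * 1 + 2 * sqrt k * \<epsilon> = 3 * sqrt k * \<epsilon>" by simp
    ultimately show ?thesis by linarith
  qed
  finally show ?thesis
    using a unfolding t0_def m_def by (simp add: algebra_simps mult_right_mono)
qed

lemma l2norm_tensor_sum_unit_le:
  assumes "row_norms_le n k 1 u" "l2norm ({..<k}\<times>{..<N}) f \<le> 1"
  shows "l2norm {..<n*N} (tensor_sum N k u f) \<le> sqrt k"
proof -
  have "sqrt k * l2norm ({..<k}\<times>{..<N}) f \<le> sqrt k" by (rule mult_left_le[OF assms(2)]) simp
  then show ?thesis using l2norm_tensor_sum_le[OF assms(1), of N f] by simp
qed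

lemma bdd_above_image_norm_tensor_sum_unit:
  "bdd_above {image_norm b d (n*N) (tensor_sum N k u f) | u f.
                row_norms_le n k 1 u \<and> l2norm ({..<k}\<times>{..<N}) f \<le> 1}"
proof (rule bdd_aboveI)
  define K where "K = L2_set (\<lambda>i. l2norm {..<n*N} (b i)) {..<d}"
  fix x assume "x \<in> {image_norm b d (n*N) (tensor_sum N k u f) | u f.
                       row_norms_le n k 1 u \<and> l2norm ({..<k}\<times>{..<N}) f \<le> 1}"
  then obtain u f where x: "x = image_norm b d (n*N) (tensor_sum N k u f)"
    and uf: "row_norms_le n k 1 u" "l2norm ({..<k}\<times>{..<N}) f \<le> 1"
    by blast
  have "x \<le> K * l2norm {..<n*N} (tensor_sum N k u f)" unfolding x K_def by (rule image_norm_le)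
  also have "\<dots> \<le> K * sqrt k"
    using l2norm_tensor_sum_unit_le[OF uf] by (intro mult_left_mono) (auto simp: K_def)
  finally show "x \<le> K * sqrt k" .
qed

text \<open>The best constant S on the unit balls is finite by the Hilbert-Schmidt bound, and the
  previous lemma gives S <= sqrt a * sqrt k * (1 + 3 eps) + 3 eps S, whence S <= 3 sqrt a sqrt k
  for eps <= 1/6.\<close>

lemma image_norm_tensor_sum_unit_bound:
  assumes eps: "0 < \<epsilon>" "\<epsilon> \<le> 1/6" and a: "0 \<le> a" and nN: "n > 0" "N > 0" "k > 0"
    and net: "\<And>u f. u \<in> row_net n k \<epsilon> \<Longrightarrow> f \<in> coef_net N k \<epsilon> \<Longrightarrow>
              image_norm b d (n*N) (tensor_sum N k u f) \<le> sqrt a * l2norm {..<n*N} (tensor_sum N k u f)"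
  obtains S where "S \<le> 3 * sqrt a * sqrt k"
    "\<And>u f. row_norms_le n k 1 u \<Longrightarrow> l2norm ({..<k}\<times>{..<N}) f \<le> 1 \<Longrightarrow>
       image_norm b d (n*N) (tensor_sum N k u f) \<le> S"
proof -
  define I where "I = {..<k}\<times>{..<N}"
  define SS where "SS = {image_norm b d (n*N) (tensor_sum N k u f) | u f.
                          row_norms_le n k 1 u \<and> l2norm I f \<le> 1}"
  have l2_le: "l2norm {..<n*N} (tensor_sum N k u f) \<le> sqrt k"
    if "row_norms_le n k 1 u" "l2norm I f \<le> 1" for u f
    using l2norm_tensor_sum_unit_le that unfolding I_def by blast
  have bdd: "bdd_above SS"
    unfolding SS_def I_def by (rule bdd_above_image_norm_tensor_sum_unit)
  have zero: "row_norms_le n k 1 (\<lambda>_. 0)" "l2norm I (\<lambda>_. 0) \<le> 1"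
    by (simp_all add: row_norms_le_def)
  then have ne: "SS \<noteq> {}" unfolding SS_def by blast
  define S where "S = Sup SS"
  have le_S: "image_norm b d (n*N) (tensor_sum N k u f) \<le> S"
    if "row_norms_le n k 1 u" "l2norm ({..<k}\<times>{..<N}) f \<le> 1" for u f
  proof -
    have "image_norm b d (n*N) (tensor_sum N k u f) \<in> SS"
      unfolding SS_def I_def using that by blast
    then show ?thesis unfolding S_def by (rule cSup_upper[OF _ bdd])
  qed
  have S0: "0 \<le> S" using le_S[OF zero[unfolded I_def]] image_norm_nonneg order_trans by blast
  define A where "A = sqrt a * sqrt k"
  have A0: "0 \<le> A" unfolding A_def using a by simp
  have "S \<le> A * (1 + 3*\<epsilon>) + 3 * \<epsilon> * S"
    unfolding S_def
  proof (rule cSup_least[OF ne])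
    fix x assume "x \<in> SS"
    then obtain u f where x: "x = image_norm b d (n*N) (tensor_sum N k u f)"
      and uf: "row_norms_le n k 1 u" "l2norm I f \<le> 1"
      unfolding SS_def by blast
    have "x \<le> sqrt a * (l2norm {..<n*N} (tensor_sum N k u f) + 3 * sqrt k * \<epsilon>) + 3 * \<epsilon> * S"
      unfolding x using eps uf
      by (intro image_norm_tensor_sum_le_net[OF _ _ a nN net le_S]) (auto simp: I_def)
    also have "\<dots> \<le> sqrt a * (sqrt k + 3 * sqrt k * \<epsilon>) + 3 * \<epsilon> * S"
      using l2_le[OF uf] a by (intro add_right_mono mult_left_mono) auto
    finally show "x \<le> A * (1 + 3*\<epsilon>) + 3 * \<epsilon> * Sup SS"
      by (simp add: A_def S_def algebra_simps)
  qed
  moreover have "3 * \<epsilon> * S \<le> 1/2 * S" using S0 eps by (intro mult_right_mono) auto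
  moreover have "A * (3 * \<epsilon>) \<le> A * (1/2)" using A0 eps by (intro mult_left_mono) auto
  ultimately have "S \<le> 3 * A" by (simp add: algebra_simps)
  then show ?thesis using that le_S unfolding A_def by (simp add: mult.assoc)
qed

lemma image_norm_tensor_sum_orthonormal_le:
  assumes eps: "0 < \<epsilon>" "\<epsilon> \<le> 1/6" and a: "0 \<le> a"
    and ac: "sqrt a * (1 + 12 * \<epsilon> * sqrt k) \<le> sqrt c" and nN: "n > 0" "N > 0" "k > 0"
    and net: "\<And>u f. u \<in> row_net n k \<epsilon> \<Longrightarrow> f \<in> coef_net N k \<epsilon> \<Longrightarrow>
              image_norm b d (n*N) (tensor_sum N k u f) \<le> sqrt a * l2norm {..<n*N} (tensor_sum N k u f)"
    and u: "orthonormal_rows n k u"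
  shows "image_norm b d (n*N) (tensor_sum N k u f) \<le> sqrt c * l2norm {..<n*N} (tensor_sum N k u f)"
proof -
  obtain S where S: "S \<le> 3 * sqrt a * sqrt k"
    and le_S: "\<And>u f. row_norms_le n k 1 u \<Longrightarrow> l2norm ({..<k}\<times>{..<N}) f \<le> 1 \<Longrightarrow>
                 image_norm b d (n*N) (tensor_sum N k u f) \<le> S"
    using image_norm_tensor_sum_unit_bound[OF eps a nN net] by blast
  define F where "F = l2norm ({..<k}\<times>{..<N}) f"
  have F_eq: "l2norm {..<n*N} (tensor_sum N k u f) = F"
    unfolding F_def by (rule l2norm_tensor_sum_orthonormal[OF u])
  have "0 \<le> sqrt a * (1 + 12 * \<epsilon> * sqrt k)" using eps a by (intro mult_nonneg_nonneg) auto
  then have c0: "0 \<le> sqrt c" using ac by linarith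
  show ?thesis
  proof (cases "F = 0")
    case True
    then have "\<forall>p\<in>{..<k}\<times>{..<N}. f p = 0" unfolding F_def l2norm_def by (simp add: L2_set_eq_0_iff)
    then have "tensor_sum N k u f j = 0" if "j < n*N" for j
      using nN unfolding tensor_sum_def by auto
    then have "image_norm b d (n*N) (tensor_sum N k u f) = image_norm b d (n*N) (\<lambda>j. 0 * 0)"
      by (intro image_norm_cong) simp
    then show ?thesis using c0 by (simp only: image_norm_mult) simp
  next
    case False
    then have F0: "0 < F" using l2norm_nonneg[of "{..<k}\<times>{..<N}" f] unfolding F_def by linarith
    define f1 where "f1 p = f p / complex_of_real F" for p
    have f1: "l2norm ({..<k}\<times>{..<N}) f1 = 1"
      unfolding f1_def using F0 by (simp add: l2norm_divide_of_real F_def)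
    have "image_norm b d (n*N) (tensor_sum N k u f1)
        \<le> sqrt a * (l2norm {..<n*N} (tensor_sum N k u f1) + 3 * sqrt k * \<epsilon>) + 3 * \<epsilon> * S"
      using eps f1 by (intro image_norm_tensor_sum_le_net[OF _ _ a nN net le_S row_norms_le_orthonormal[OF u]]) auto
    also have "\<dots> \<le> sqrt a * (1 + 3 * sqrt k * \<epsilon>) + 3 * \<epsilon> * (3 * sqrt a * sqrt k)"
      using S eps f1 by (simp add: l2norm_tensor_sum_orthonormal[OF u])
    also have "\<dots> = sqrt a * (1 + 12 * \<epsilon> * sqrt k)" by (simp add: algebra_simps)
    finally have "image_norm b d (n*N) (tensor_sum N k u f1) \<le> sqrt c" using ac by linarith
    then have "F * image_norm b d (n*N) (tensor_sum N k u f1) \<le> F * sqrt c"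
      using F0 by (intro mult_left_mono) auto
    moreover have "tensor_sum N k u f = (\<lambda>j. complex_of_real F * tensor_sum N k u f1 j)"
      using F0 by (simp add: f1_def tensor_sum_mult_right[symmetric])
    then have "image_norm b d (n*N) (tensor_sum N k u f) = F * image_norm b d (n*N) (tensor_sum N k u f1)"
      using F0 by (simp add: image_norm_mult)
    ultimately show ?thesis unfolding F_eq by (simp add: mult.commute)
  qed
qed

section \<open>Tail bounds for complex Gaussian matrices\<close>

lemma normal_density_mult_exp_power2:
  fixes \<sigma> u :: real
  assumes "0 < \<sigma>" "2 * u * \<sigma>\<^sup>2 < 1"
  shows "normal_density 0 \<sigma> x * exp (u * x\<^sup>2)
           = (1 / sqrt (1 - 2*u*\<sigma>\<^sup>2)) * normal_density 0 (\<sigma> / sqrt (1 - 2*u*\<sigma>\<^sup>2)) x"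
proof -
  define w where "w = 1 - 2*u*\<sigma>\<^sup>2"
  have w0: "0 < w" using assms unfolding w_def by simp
  have e: "exp (-(x\<^sup>2) / (2 * \<sigma>\<^sup>2)) * exp (u * x\<^sup>2) = exp (- (x\<^sup>2) / (2 * (\<sigma> / sqrt w)\<^sup>2))"
    unfolding mult_exp_exp using assms w0 by (simp add: w_def power_divide field_simps)
  have s: "sqrt (2 * pi * \<sigma>\<^sup>2) = sqrt w * sqrt (2 * pi * (\<sigma> / sqrt w)\<^sup>2)"
    using w0 by (simp add: power_divide real_sqrt_mult real_sqrt_divide)
  have "normal_density 0 \<sigma> x * exp (u * x\<^sup>2)
      = (exp (-(x\<^sup>2) / (2 * \<sigma>\<^sup>2)) * exp (u * x\<^sup>2)) / sqrt (2 * pi * \<sigma>\<^sup>2)"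
    by (simp add: normal_density_def)
  also have "\<dots> = exp (- (x\<^sup>2) / (2 * (\<sigma> / sqrt w)\<^sup>2)) / (sqrt w * sqrt (2 * pi * (\<sigma> / sqrt w)\<^sup>2))"
    by (simp only: e s)
  also have "\<dots> = (1 / sqrt w) * normal_density 0 (\<sigma> / sqrt w) x"
    by (simp add: normal_density_def)
  finally show ?thesis unfolding w_def .
qed

context prob_space
begin

lemma nn_integral_exp_power2_normal:
  fixes \<sigma> u :: real
  assumes Y: "distributed M lborel Y (normal_density 0 \<sigma>)"
    and "0 < \<sigma>" "2 * u * \<sigma>\<^sup>2 < 1"
  shows "(\<integral>\<^sup>+\<omega>. ennreal (exp (u * (Y \<omega>)\<^sup>2)) \<partial>M) = ennreal (1 / sqrt (1 - 2*u*\<sigma>\<^sup>2))"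
proof -
  define w where "w = 1 - 2*u*\<sigma>\<^sup>2"
  have w0: "0 < w" using assms unfolding w_def by simp
  have "(\<integral>\<^sup>+\<omega>. ennreal (exp (u * (Y \<omega>)\<^sup>2)) \<partial>M)
      = (\<integral>\<^sup>+x. ennreal (normal_density 0 \<sigma> x) * ennreal (exp (u * x\<^sup>2)) \<partial>lborel)"
    by (rule distributed_nn_integral[OF Y, symmetric]) simp
  also have "\<dots> = (\<integral>\<^sup>+x. ennreal (1 / sqrt w) * ennreal (normal_density 0 (\<sigma> / sqrt w) x) \<partial>lborel)"
    using normal_density_mult_exp_power2[OF assms(2,3)] w0
    by (intro nn_integral_cong) (simp add: w_def ennreal_mult[symmetric])
  also have "\<dots> = ennreal (1 / sqrt w) * (\<integral>\<^sup>+x. ennreal (normal_density 0 (\<sigma> / sqrt w) x) \<partial>lborel)"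
    by (rule nn_integral_cmult) simp
  also have "\<dots> = ennreal (1 / sqrt w)"
    using assms(2) w0 by (subst nn_integral_eq_integral) auto
  finally show ?thesis unfolding w_def .
qed

text \<open>No independence of R and I is needed:
  exp (t (R^2 + I^2)) <= (exp (2 t R^2) + exp (2 t I^2)) / 2 by AM-GM.\<close>

lemma nn_integral_exp_cmod_power2_le:
  fixes \<sigma> t :: real
  assumes R: "distributed M lborel R (normal_density 0 \<sigma>)"
    and I: "distributed M lborel I (normal_density 0 \<sigma>)"
    and \<sigma>: "0 < \<sigma>" and t: "4 * t * \<sigma>\<^sup>2 < 1"
  shows "(\<integral>\<^sup>+\<omega>. ennreal (exp (t * ((R \<omega>)\<^sup>2 + (I \<omega>)\<^sup>2))) \<partial>M) \<le> ennreal (1 / sqrt (1 - 4*t*\<sigma>\<^sup>2))"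
proof -
  define q where "q = 4*t*\<sigma>\<^sup>2"
  have q1: "q < 1" using t unfolding q_def by simp
  have [measurable]: "R \<in> borel_measurable M" "I \<in> borel_measurable M"
    using R I by (auto dest: distributed_measurable)
  have mgf: "(\<integral>\<^sup>+\<omega>. ennreal (exp (2*t * (Y \<omega>)\<^sup>2)) \<partial>M) = ennreal (1 / sqrt (1 - q))"
    if "distributed M lborel Y (normal_density 0 \<sigma>)" for Y
    using nn_integral_exp_power2_normal[OF that \<sigma>, of "2*t"] t unfolding q_def by simp
  have amgm: "exp (t * (x\<^sup>2 + y\<^sup>2)) \<le> 1/2 * exp (2*t * x\<^sup>2) + 1/2 * exp (2*t * y\<^sup>2)" for x y :: real
  proof -
    define A where "A = exp (t * x\<^sup>2)"
    define C where "C = exp (t * y\<^sup>2)"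
    have "exp (t * (x\<^sup>2 + y\<^sup>2)) = A * C" by (simp add: A_def C_def distrib_left exp_add)
    moreover have "exp (2*t * x\<^sup>2) = A\<^sup>2" "exp (2*t * y\<^sup>2) = C\<^sup>2"
      by (simp_all add: A_def C_def power2_eq_square exp_add[symmetric])
    moreover have "A * C \<le> 1/2 * A\<^sup>2 + 1/2 * C\<^sup>2" using sum_squares_ge_zero[of "A - C" 0]
      by (simp add: power2_eq_square algebra_simps)
    ultimately show ?thesis by simp
  qed
  have "(\<integral>\<^sup>+\<omega>. ennreal (exp (t * ((R \<omega>)\<^sup>2 + (I \<omega>)\<^sup>2))) \<partial>M)
      \<le> (\<integral>\<^sup>+\<omega>. ennreal (1/2 * exp (2*t * (R \<omega>)\<^sup>2)) + ennreal (1/2 * exp (2*t * (I \<omega>)\<^sup>2)) \<partial>M)"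
    using amgm by (intro nn_integral_mono) (simp del: ennreal_plus flip: ennreal_plus)
  also have "\<dots> = (\<integral>\<^sup>+\<omega>. ennreal (1/2) * ennreal (exp (2*t * (R \<omega>)\<^sup>2)) \<partial>M)
                 + (\<integral>\<^sup>+\<omega>. ennreal (1/2) * ennreal (exp (2*t * (I \<omega>)\<^sup>2)) \<partial>M)"
  proof -
    have em: "ennreal (1/2 * exp x) = ennreal (1/2) * ennreal (exp x)" for x :: real
      by (rule ennreal_mult) auto
    show ?thesis unfolding em by (intro nn_integral_add) auto
  qed
  also have "\<dots> = ennreal (1/2) * ennreal (1 / sqrt (1 - q)) + ennreal (1/2) * ennreal (1 / sqrt (1 - q))"
    by (simp add: nn_integral_cmult mgf[OF R] mgf[OF I])
  also have "\<dots> = ennreal (1 / sqrt (1 - q))"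
  proof -
    have "ennreal (1/2) * ennreal (1 / sqrt (1 - q)) = ennreal (1/2 * (1 / sqrt (1 - q)))"
      by (rule ennreal_mult[symmetric]) (use q1 in auto)
    moreover have "ennreal (1/2 * (1 / sqrt (1 - q))) + ennreal (1/2 * (1 / sqrt (1 - q)))
        = ennreal (1 / sqrt (1 - q))"
      by (subst ennreal_plus[symmetric]) (use q1 in auto)
    ultimately show ?thesis by (simp only:)
  qed
  finally show ?thesis unfolding q_def .
qed

lemma distributed_lin_comb_normal:
  fixes X :: "'i \<Rightarrow> 'a \<Rightarrow> real" and coef :: "'i \<Rightarrow> real"
  assumes J: "finite J" and ind: "indep_vars (\<lambda>_. borel) X J"
    and nd: "\<And>p. p \<in> J \<Longrightarrow> distributed M lborel (X p) (normal_density 0 \<sigma>)"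
    and \<sigma>: "0 < \<sigma>" and pos: "(\<Sum>p\<in>J. (coef p)\<^sup>2) > 0"
  shows "distributed M lborel (\<lambda>\<omega>. \<Sum>p\<in>J. coef p * X p \<omega>)
           (normal_density 0 (\<sigma> * sqrt (\<Sum>p\<in>J. (coef p)\<^sup>2)))"
proof -
  define J' where "J' = {p\<in>J. coef p \<noteq> 0}"
  have J'J: "J' \<subseteq> J" unfolding J'_def by auto
  have finJ': "finite J'" using J J'J finite_subset by blast
  have sumJ': "(\<Sum>p\<in>J'. g p) = (\<Sum>p\<in>J. g p)"
    if "\<And>p. p \<in> J \<Longrightarrow> coef p = 0 \<Longrightarrow> g p = 0" for g :: "'i \<Rightarrow> real"
    by (rule sum.mono_neutral_left[OF J J'J]) (use that in \<open>auto simp: J'_def\<close>)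
  have ne: "J' \<noteq> {}"
  proof
    assume "J' = {}"
    then have "(\<Sum>p\<in>J. (coef p)\<^sup>2) = 0" using sumJ'[of "\<lambda>p. (coef p)\<^sup>2"] by simp
    then show False using pos by simp
  qed
  have ind': "indep_vars (\<lambda>_. borel) (\<lambda>p \<omega>. (\<lambda>x. coef p * x) (X p \<omega>)) J'"
    by (rule indep_vars_compose2[OF indep_vars_subset[OF ind J'J]]) simp
  have nd': "distributed M lborel (\<lambda>\<omega>. coef p * X p \<omega>) (normal_density 0 (\<bar>coef p\<bar> * \<sigma>))"
    if p: "p \<in> J'" for p
    using normal_density_affine[OF nd[of p] \<sigma>, of "coef p" 0] p by (simp add: J'_def)
  have "distributed M lborel (\<lambda>\<omega>. \<Sum>p\<in>J'. coef p * X p \<omega>)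
          (normal_density (\<Sum>p\<in>J'. 0) (sqrt (\<Sum>p\<in>J'. (\<bar>coef p\<bar> * \<sigma>)\<^sup>2)))"
    by (rule sum_indep_normal[OF finJ' ne ind']) (use \<sigma> nd' in \<open>auto simp: J'_def\<close>)
  moreover have "(\<lambda>\<omega>. \<Sum>p\<in>J'. coef p * X p \<omega>) = (\<lambda>\<omega>. \<Sum>p\<in>J. coef p * X p \<omega>)"
    by (intro ext sumJ') simp
  moreover have "sqrt (\<Sum>p\<in>J'. (\<bar>coef p\<bar> * \<sigma>)\<^sup>2) = \<sigma> * sqrt (\<Sum>p\<in>J. (coef p)\<^sup>2)"
  proof -
    have "(\<Sum>p\<in>J'. (\<bar>coef p\<bar> * \<sigma>)\<^sup>2) = \<sigma>\<^sup>2 * (\<Sum>p\<in>J. (coef p)\<^sup>2)"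
      using sumJ'[of "\<lambda>p. (coef p)\<^sup>2"]
      by (simp add: power_mult_distrib sum_distrib_left[symmetric] mult.commute)
    then show ?thesis using \<sigma> by (simp add: real_sqrt_mult)
  qed
  ultimately show ?thesis by simp
qed

end

lemma sum_row_bool:
  "(\<Sum>p\<in>{i}\<times>{..<c}\<times>(UNIV::bool set). g p) = (\<Sum>j<c. g (i,j,True) + g (i,j,False))"
  by (simp add: sum.cartesian_product' UNIV_bool add.commute)

context prob_space
begin

lemma complex_gaussian_row_normal:
  assumes cg: "complex_gaussian_matrix M s2 r c B" and s2: "0 < s2" and i: "i < r"
    and y: "0 < (\<Sum>j<c. (cmod (y j))\<^sup>2)"
  shows "distributed M lborel (\<lambda>\<omega>. Re (\<Sum>j<c. B \<omega> $$ (i,j) * y j))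
           (normal_density 0 (sqrt (s2/2) * sqrt (\<Sum>j<c. (cmod (y j))\<^sup>2)))"
    and "distributed M lborel (\<lambda>\<omega>. Im (\<Sum>j<c. B \<omega> $$ (i,j) * y j))
           (normal_density 0 (sqrt (s2/2) * sqrt (\<Sum>j<c. (cmod (y j))\<^sup>2)))"
proof -
  define X where "X = (\<lambda>(i,j,b) \<omega>. if b then Re (B \<omega> $$ (i,j)) else Im (B \<omega> $$ (i,j)))"
  define IX where "IX = {..<r} \<times> {..<c} \<times> (UNIV :: bool set)"
  define K where "K = {i}\<times>{..<c}\<times>(UNIV::bool set)"
  define cR where "cR p = (case p of (i,j,b) \<Rightarrow> if b then Re (y j) else - Im (y j))" for p :: "nat\<times>nat\<times>bool"
  define cI where "cI p = (case p of (i,j,b) \<Rightarrow> if b then Im (y j) else Re (y j))" for p :: "nat\<times>nat\<times>bool"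
  have ind: "indep_vars (\<lambda>_. borel) X IX"
    using cg unfolding complex_gaussian_matrix_def X_def IX_def by simp
  have KIX: "K \<subseteq> IX" using i unfolding K_def IX_def by auto
  have indK: "indep_vars (\<lambda>_. borel) X K" by (rule indep_vars_subset[OF ind KIX])
  have nd: "distributed M lborel (X p) (normal_density 0 (sqrt (s2/2)))" if p: "p \<in> K" for p
  proof -
    obtain j b where "p = (i,j,b)" "j < c" using p unfolding K_def by auto
    then show ?thesis using cg i unfolding complex_gaussian_matrix_def by (cases b) (auto simp: X_def)
  qed
  have coef: "(\<Sum>p\<in>K. (cR p)\<^sup>2) = (\<Sum>j<c. (cmod (y j))\<^sup>2)" "(\<Sum>p\<in>K. (cI p)\<^sup>2) = (\<Sum>j<c. (cmod (y j))\<^sup>2)"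
    unfolding K_def by (simp_all add: sum_row_bool cR_def cI_def cmod_power2 add.commute)
  have "Re (\<Sum>j<c. B \<omega> $$ (i,j) * y j) = (\<Sum>p\<in>K. cR p * X p \<omega>)"
       "Im (\<Sum>j<c. B \<omega> $$ (i,j) * y j) = (\<Sum>p\<in>K. cI p * X p \<omega>)" for \<omega>
    unfolding K_def by (simp_all add: sum_row_bool Re_sum Im_sum cR_def cI_def X_def algebra_simps)
  moreover have "0 < sqrt (s2/2)" using s2 by simp
  ultimately show "distributed M lborel (\<lambda>\<omega>. Re (\<Sum>j<c. B \<omega> $$ (i,j) * y j))
           (normal_density 0 (sqrt (s2/2) * sqrt (\<Sum>j<c. (cmod (y j))\<^sup>2)))"
    and "distributed M lborel (\<lambda>\<omega>. Im (\<Sum>j<c. B \<omega> $$ (i,j) * y j))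
           (normal_density 0 (sqrt (s2/2) * sqrt (\<Sum>j<c. (cmod (y j))\<^sup>2)))"
    using distributed_lin_comb_normal[where coef=cR, OF _ indK nd] distributed_lin_comb_normal[where coef=cI, OF _ indK nd]
      coef y by (auto simp: K_def)
qed

lemma complex_gaussian_rows_indep:
  fixes g :: "complex \<Rightarrow> real"
  assumes cg: "complex_gaussian_matrix M s2 r c B" and g: "g \<in> borel_measurable borel"
  shows "indep_vars (\<lambda>_. borel) (\<lambda>i \<omega>. g (\<Sum>j<c. B \<omega> $$ (i,j) * y j)) {..<r}"
proof -
  define X where "X = (\<lambda>(i,j,b) \<omega>. if b then Re (B \<omega> $$ (i,j)) else Im (B \<omega> $$ (i,j)))"
  define K where "K i = {i}\<times>{..<c}\<times>(UNIV::bool set)" for i :: nat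
  define h where "h i f = g (\<Sum>j<c. (complex_of_real (f (i,j,True)) + \<i> * complex_of_real (f (i,j,False))) * y j)"
    for i and f :: "nat\<times>nat\<times>bool \<Rightarrow> real"
  have ind: "indep_vars (\<lambda>_. borel) X ({..<r} \<times> {..<c} \<times> (UNIV :: bool set))"
    using cg unfolding complex_gaussian_matrix_def X_def by simp
  have "indep_vars (\<lambda>i. PiM (K i) (\<lambda>_. borel)) (\<lambda>i \<omega>. restrict (\<lambda>p. X p \<omega>) (K i)) {..<r}"
    by (rule indep_vars_restrict[OF ind]) (auto simp: disjoint_family_on_def K_def)
  then have "indep_vars (\<lambda>_. borel) (\<lambda>i \<omega>. h i (restrict (\<lambda>p. X p \<omega>) (K i))) {..<r}"
  proof (rule indep_vars_compose2)
    fix i :: nat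
    have summand: "(\<lambda>f. (complex_of_real (f (i,j,True)) + \<i> * complex_of_real (f (i,j,False))) * y j)
                \<in> borel_measurable (PiM (K i) (\<lambda>_. borel))" if "j \<in> {..<c}" for j
    proof -
      have [measurable]: "(\<lambda>f. f (i,j,b)) \<in> borel_measurable (PiM (K i) (\<lambda>_. borel))" for b
        by (rule measurable_component_singleton) (use that in \<open>simp add: K_def\<close>)
      show ?thesis by measurable
    qed
    show "h i \<in> borel_measurable (PiM (K i) (\<lambda>_. borel))"
      unfolding h_def by (rule measurable_compose[OF borel_measurable_sum[OF summand] g])
  qed
  moreover have "h i (restrict (\<lambda>p. X p \<omega>) (K i)) = g (\<Sum>j<c. B \<omega> $$ (i,j) * y j)" for i \<omega>
    unfolding h_def by (intro arg_cong[where f=g] sum.cong refl)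
      (simp add: K_def X_def complex_eq[of "B \<omega> $$ (i, _)", symmetric])
  ultimately show ?thesis by simp
qed

text \<open>Chernoff bound: the rows (B y)_i are independent complex Gaussians of variance
  s2 * |y|^2.\<close>

lemma complex_gaussian_image_tail:
  assumes cg: "complex_gaussian_matrix M s2 r c B" and s2: "0 < s2"
    and y: "0 < (\<Sum>j<c. (cmod (y j))\<^sup>2)"
    and t: "0 < t" "2 * t * s2 * (\<Sum>j<c. (cmod (y j))\<^sup>2) < 1"
  shows "{\<omega>\<in>space M. a * (\<Sum>j<c. (cmod (y j))\<^sup>2) < (\<Sum>i<r. (cmod (\<Sum>j<c. B \<omega> $$ (i,j) * y j))\<^sup>2)} \<in> events"
    and "measure M {\<omega>\<in>space M. a * (\<Sum>j<c. (cmod (y j))\<^sup>2) < (\<Sum>i<r. (cmod (\<Sum>j<c. B \<omega> $$ (i,j) * y j))\<^sup>2)}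
           \<le> exp (- t * a * (\<Sum>j<c. (cmod (y j))\<^sup>2)) * (1 / sqrt (1 - 2 * t * s2 * (\<Sum>j<c. (cmod (y j))\<^sup>2))) ^ r"
proof -
  define nr where "nr = (\<Sum>j<c. (cmod (y j))\<^sup>2)"
  define q where "q = 2 * t * s2 * nr"
  define row where "row i \<omega> = (\<Sum>j<c. B \<omega> $$ (i,j) * y j)" for i \<omega>
  define Q where "Q \<omega> = (\<Sum>i<r. (cmod (row i \<omega>))\<^sup>2)" for \<omega>
  define W where "W i \<omega> = exp (t * (cmod (row i \<omega>))\<^sup>2)" for i \<omega>
  define \<sigma> where "\<sigma> = sqrt (s2/2) * sqrt nr"
  have \<sigma>: "0 < \<sigma>" "4 * t * \<sigma>\<^sup>2 = q"
    using s2 y by (simp_all add: \<sigma>_def q_def nr_def power_mult_distrib)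
  have q1: "q < 1" using t by (simp add: q_def nr_def)
  have nd: "distributed M lborel (\<lambda>\<omega>. Re (row i \<omega>)) (normal_density 0 \<sigma>)"
     "distributed M lborel (\<lambda>\<omega>. Im (row i \<omega>)) (normal_density 0 \<sigma>)" if "i < r" for i
    using complex_gaussian_row_normal[OF cg s2 that y] unfolding row_def \<sigma>_def nr_def by auto
  have meas_row: "(\<lambda>\<omega>. Re (row i \<omega>)) \<in> borel_measurable M" "(\<lambda>\<omega>. Im (row i \<omega>)) \<in> borel_measurable M"
    if "i < r" for i
    using nd[OF that] by (auto dest: distributed_measurable)
  have W_eq: "W i \<omega> = exp (t * ((Re (row i \<omega>))\<^sup>2 + (Im (row i \<omega>))\<^sup>2))" for i \<omega>
    by (simp add: W_def cmod_power2)
  have [measurable]: "Q \<in> borel_measurable M"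
    unfolding Q_def cmod_power2 using meas_row by (auto intro!: borel_measurable_sum)
  have EW: "(\<integral>\<^sup>+\<omega>. ennreal (W i \<omega>) \<partial>M) \<le> ennreal (1 / sqrt (1 - q))" if "i < r" for i
    unfolding W_eq using nn_integral_exp_cmod_power2_le[OF nd[OF that] \<sigma>(1), of t] \<sigma>(2) q1 by simp
  have indW: "indep_vars (\<lambda>_. borel) (\<lambda>i \<omega>. ennreal (W i \<omega>)) {..<r}"
    using complex_gaussian_rows_indep[OF cg, of "\<lambda>z. exp (t * (cmod z)\<^sup>2)" y]
    unfolding W_def row_def by (rule indep_vars_compose2) auto
  define E where "E = {\<omega>\<in>space M. a * nr < Q \<omega>}"
  have "E \<in> events" unfolding E_def by measurable
  then show "{\<omega>\<in>space M. a * (\<Sum>j<c. (cmod (y j))\<^sup>2) < (\<Sum>i<r. (cmod (\<Sum>j<c. B \<omega> $$ (i,j) * y j))\<^sup>2)} \<in> events"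
    unfolding E_def Q_def row_def nr_def .
  have "emeasure M E \<le> emeasure M {\<omega>\<in>space M. Q \<omega> \<ge> a * nr}"
    by (rule emeasure_mono) (auto simp: E_def)
  also have "\<dots> \<le> ennreal (exp (- t * (a * nr))) * (\<integral>\<^sup>+\<omega>. ennreal (exp (t * Q \<omega>)) * indicator (space M) \<omega> \<partial>M)"
    using t by (intro Chernoff_ineq_nn_integral_ge) auto
  also have "(\<integral>\<^sup>+\<omega>. ennreal (exp (t * Q \<omega>)) * indicator (space M) \<omega> \<partial>M) = (\<integral>\<^sup>+\<omega>. (\<Prod>i<r. ennreal (W i \<omega>)) \<partial>M)"
    by (intro nn_integral_cong)
       (simp add: Q_def W_def sum_distrib_left exp_sum prod_ennreal)
  also have "\<dots> = (\<Prod>i<r. \<integral>\<^sup>+\<omega>. ennreal (W i \<omega>) \<partial>M)"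
    by (rule indep_vars_nn_integral[OF _ indW]) auto
  also have "\<dots> \<le> (\<Prod>i<r. ennreal (1 / sqrt (1 - q)))"
    by (rule prod_mono_ennreal) (auto simp: EW)
  also have "ennreal (exp (- t * (a * nr))) * \<dots> = ennreal (exp (- t * a * nr) * (1 / sqrt (1 - q)) ^ r)"
    using q1 by (simp add: prod_ennreal ennreal_power ennreal_mult[symmetric])
  finally have "measure M E \<le> exp (- t * a * nr) * (1 / sqrt (1 - q)) ^ r"
    using q1 by (simp add: emeasure_eq_measure mult_left_mono)
  then show "measure M {\<omega>\<in>space M. a * (\<Sum>j<c. (cmod (y j))\<^sup>2) < (\<Sum>i<r. (cmod (\<Sum>j<c. B \<omega> $$ (i,j) * y j))\<^sup>2)}
      \<le> exp (- t * a * (\<Sum>j<c. (cmod (y j))\<^sup>2)) * (1 / sqrt (1 - 2 * t * s2 * (\<Sum>j<c. (cmod (y j))\<^sup>2))) ^ r"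
    unfolding E_def Q_def row_def nr_def q_def .
qed

lemma complex_gaussian_image_norm_tail:
  assumes cg: "complex_gaussian_matrix M (1 / real m) r m B" and m: "0 < m"
    and q: "0 < q" "q < 1" and r: "real r \<le> \<rho> * real m"
  shows "{\<omega>\<in>space M. a * (\<Sum>j<m. (cmod (y j))\<^sup>2) < (\<Sum>i<r. (cmod (\<Sum>j<m. B \<omega> $$ (i,j) * y j))\<^sup>2)} \<in> events"
    and "measure M {\<omega>\<in>space M. a * (\<Sum>j<m. (cmod (y j))\<^sup>2) < (\<Sum>i<r. (cmod (\<Sum>j<m. B \<omega> $$ (i,j) * y j))\<^sup>2)}
           \<le> exp (- real m * (q * a + \<rho> * ln (1 - q)) / 2)"
proof -
  define nr where "nr = (\<Sum>j<m. (cmod (y j))\<^sup>2)"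
  define E where "E = {\<omega>\<in>space M. a * nr < (\<Sum>i<r. (cmod (\<Sum>j<m. B \<omega> $$ (i,j) * y j))\<^sup>2)}"
  have "E \<in> events \<and> measure M E \<le> exp (- real m * (q * a + \<rho> * ln (1 - q)) / 2)"
  proof (cases "nr = 0")
    case True
    then have "y j = 0" if "j < m" for j
      using that unfolding nr_def by (simp add: sum_nonneg_eq_0_iff)
    then have "E = {}" unfolding E_def True by simp
    then show ?thesis by simp
  next
    case False
    then have nr0: "0 < nr" unfolding nr_def by (simp add: sum_nonneg less_le)
    define t where "t = q * real m / (2 * nr)"
    have t: "0 < t" "2 * t * (1 / real m) * nr = q" using q nr0 m unfolding t_def by simp_all
    have tq: "2 * t * (1 / real m) * nr < 1" using t(2) q by simp
    note tail = complex_gaussian_image_tail[OF cg _ nr0[unfolded nr_def] t(1) tq[unfolded nr_def], of a,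
        folded nr_def, unfolded t(2)]
    have "measure M E \<le> exp (- t * a * nr) * (1 / sqrt (1 - q)) ^ r"
      using tail(2) m unfolding E_def by simp
    also have "exp (- t * a * nr) = exp (- real m * (q * a) / 2)"
      using nr0 unfolding t_def by (simp add: field_simps)
    also have "(1 / sqrt (1 - q)) ^ r = exp (real r * (- ln (1 - q) / 2))"
    proof -
      have "sqrt (1 - q) = exp (ln (1 - q) / 2)"
        using q by (simp add: powr_half_sqrt[symmetric] powr_def)
      then have "1 / sqrt (1 - q) = exp (- ln (1 - q) / 2)"
        by (simp add: exp_minus inverse_eq_divide)
      then show ?thesis by (simp add: exp_of_nat_mult[symmetric] mult.commute)
    qed
    also have "\<dots> \<le> exp (\<rho> * real m * (- ln (1 - q) / 2))"
      using r q by (intro exp_mono mult_right_mono) auto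
    also have "exp (- real m * (q * a) / 2) * exp (\<rho> * real m * (- ln (1 - q) / 2))
        = exp (- real m * (q * a + \<rho> * ln (1 - q)) / 2)"
      by (simp add: mult_exp_exp field_simps)
    finally show ?thesis using tail(1) m unfolding E_def by simp
  qed
  then show "{\<omega>\<in>space M. a * (\<Sum>j<m. (cmod (y j))\<^sup>2) < (\<Sum>i<r. (cmod (\<Sum>j<m. B \<omega> $$ (i,j) * y j))\<^sup>2)} \<in> events"
    and "measure M {\<omega>\<in>space M. a * (\<Sum>j<m. (cmod (y j))\<^sup>2) < (\<Sum>i<r. (cmod (\<Sum>j<m. B \<omega> $$ (i,j) * y j))\<^sup>2)}
           \<le> exp (- real m * (q * a + \<rho> * ln (1 - q)) / 2)"
    unfolding E_def nr_def by auto
qed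

end

section \<open>Orthogonal projections and block positivity\<close>

context cof_vec_space
begin

lemma span_maximal_eq:
  assumes S: "S \<subseteq> carrier_vec n" and fin: "finite S"
    and max: "maximal U (\<lambda>T. T \<subseteq> S \<and> lin_indpt T)"
  shows "span U = span S"
proof -
  have "lin_indpt U" "U \<subseteq> S" by (metis max maximal_def)+
  show "span U = span S"
  proof (rule ccontr)
    assume "span U \<noteq> span S"
    have "span U \<subseteq> span S" using span_is_monotone \<open>U\<subseteq>S\<close> by metis
    then have "\<not> S \<subseteq> span U" by (meson \<open>U \<subseteq> S\<close> \<open>span U \<noteq> span S\<close> S span_is_submodule
      span_is_subset subset_antisym subset_trans)
    then obtain s where "s\<in>S" "s \<notin> span U" by blast
    then have "lin_indpt (U\<union>{s})" using lindep_span
      by (meson \<open>U \<subseteq> S\<close> \<open>lin_indpt U\<close> S lin_dep_iff_in_span rev_subsetD span_mem subset_trans)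
    have "s\<notin>U" using \<open>U \<subseteq> S\<close> \<open>s \<notin> span U\<close> S span_mem by auto
    then have "(U\<union>{s}) \<subseteq> S \<and> lin_indpt (U\<union>{s})" using \<open>U \<subseteq> S\<close> \<open>lin_indpt (U \<union> {s})\<close> \<open>s \<in> S\<close> by auto
    then have "\<not>maximal U (\<lambda>T. T \<subseteq> S \<and> lin_indpt T)"
      unfolding maximal_def using Un_subset_iff \<open>s \<notin> U\<close> insert_subset  order_refl by auto
    then show False using max by metis
  qed
qed

lemma idempotent_orthogonal_basis:
  fixes P :: "'a mat"
  assumes P: "P \<in> carrier_mat n n" and idem: "P * P = P" and rk: "rank P = k"
  shows "\<exists>us. length us = k \<and> set us \<subseteq> carrier_vec n \<and> corthogonal us \<and> (\<forall>u\<in>set us. P *\<^sub>v u = u)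
            \<and> (\<forall>x\<in>carrier_vec n. P *\<^sub>v x \<in> span (set us))"
proof -
  have colsP: "set (cols P) \<subseteq> carrier_vec n" using P cols_dim by blast
  have li0: "lin_indpt {}"
    by (metis (no_types) empty_subsetI fin_dim finite_basis_exists subset_li_is_li vec_vs vectorspace.basis_def)
  obtain S where finS: "finite S" and maxS: "maximal S (\<lambda>T. T \<subseteq> set (cols P) \<and> lin_indpt T)"
    using maximal_exists_superset[of "set (cols P)" "\<lambda>T. T \<subseteq> set (cols P) \<and> lin_indpt T" "{}"] li0 by auto
  have cardS: "card S = k" using rank_card_indpt[OF P maxS] rk by simp
  have spanS: "span S = span (set (cols P))" by (rule span_maximal_eq[OF colsP _ maxS]) simp
  have SP: "S \<subseteq> set (cols P)" "lin_indpt S" using maxS unfolding maximal_def by auto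
  obtain ws where ws: "set ws = S" "distinct ws" using finite_distinct_list[OF finS] by blast
  define us where "us = gram_schmidt n ws"
  have wsC: "set ws \<subseteq> carrier_vec n" using ws SP colsP by auto
  note gs = gram_schmidt_result[OF wsC ws(2) _ us_def]
  have li: "\<not> lin_dep (set ws)" using SP ws by simp
  have spanus: "span (set us) = span (set (cols P))" using gs(1)[OF li] ws spanS by simp
  have colsp: "P *\<^sub>v x \<in> span (set (cols P))" if "x \<in> carrier_vec n" for x
    using col_space_eq[OF P] that P unfolding col_space_def by auto
  have fix_u: "P *\<^sub>v u = u" if u: "u \<in> set us" for u
  proof -
    have "u \<in> span (set (cols P))" using u spanus gs(3)[OF li] span_mem by blast
    then obtain z where z: "z \<in> carrier_vec n" "P *\<^sub>v z = u"
      using col_space_eq[OF P] P unfolding col_space_def by auto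
    have "P *\<^sub>v u = (P * P) *\<^sub>v z" using z P by (simp add: assoc_mult_mat_vec)
    then show ?thesis using idem z by simp
  qed
  show ?thesis
    using gs[OF li] cardS ws fix_u colsp spanus
    by (intro exI[of _ us]) (auto simp: distinct_card)
qed

lemma idempotent_orthogonal_basis_mat_of_cols:
  fixes P :: "'a mat"
  assumes P: "P \<in> carrier_mat n n" and idem: "P * P = P" and rk: "rank P = k"
  shows "\<exists>us. length us = k \<and> set us \<subseteq> carrier_vec n \<and> corthogonal us \<and> (\<forall>u\<in>set us. P *\<^sub>v u = u)
            \<and> (\<forall>x\<in>carrier_vec n. \<exists>c. P *\<^sub>v x = mat_of_cols n us *\<^sub>v vec k c)"
proof -
  obtain us where us: "length us = k" "set us \<subseteq> carrier_vec n" "corthogonal us" "\<forall>u\<in>set us. P *\<^sub>v u = u"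
    "\<forall>x\<in>carrier_vec n. P *\<^sub>v x \<in> span (set us)"
    using idempotent_orthogonal_basis[OF P idem rk] by blast
  have "\<exists>c. P *\<^sub>v x = mat_of_cols n us *\<^sub>v vec k c" if x: "x \<in> carrier_vec n" for x
  proof -
    have "P *\<^sub>v x \<in> span_list us" using us(5) x span_list_as_span[OF us(2)] by auto
    then obtain c where c: "P *\<^sub>v x = lincomb_list c us" by (auto elim: in_span_listE)
    also have "\<dots> = mat_of_cols n us *\<^sub>v vec (length us) c"
      by (rule lincomb_list_as_mat_mult) (use us(2) in auto)
    finally show ?thesis using us(1) by blast
  qed
  then show ?thesis using us by blast
qed

end



lemma mat_adjoint_carrier: "A \<in> carrier_mat p q \<Longrightarrow> mat_adjoint A \<in> carrier_mat q p"
  unfolding mat_adjoint_def by auto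

lemma mat_adjoint_index:
  fixes A :: "complex mat"
  assumes "A \<in> carrier_mat p q" "i < q" "j < p"
  shows "mat_adjoint A $$ (i,j) = cnj (A $$ (j,i))"
  using assms unfolding mat_adjoint_def by (simp add: mat_of_rows_index)

lemma mult_mat_vec_index_sum:
  fixes A :: "complex mat"
  assumes "A \<in> carrier_mat p q" "x \<in> carrier_vec q" "i < p"
  shows "(A *\<^sub>v x) $ i = (\<Sum>j<q. A $$ (i,j) * x $ j)"
  using assms by (simp add: scalar_prod_def row_def atLeast0LessThan)

lemma cscalar_prod_sum:
  fixes x y :: "complex vec"
  assumes "y \<in> carrier_vec p"
  shows "x \<bullet>c y = (\<Sum>i<p. x $ i * cnj (y $ i))"
  using assms by (simp add: scalar_prod_def atLeast0LessThan)

lemma times_mat_index_sum: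
  fixes A B :: "complex mat"
  assumes "A \<in> carrier_mat p q" "B \<in> carrier_mat q r" "i < p" "j < r"
  shows "(A * B) $$ (i,j) = (\<Sum>l<q. A $$ (i,l) * B $$ (l,j))"
  using assms by (simp add: scalar_prod_def row_def col_def atLeast0LessThan)

lemma mat_of_cols_mult_vec_index:
  fixes us :: "complex vec list"
  assumes "i < n" "length us = k"
  shows "(mat_of_cols n us *\<^sub>v vec k c) $ i = (\<Sum>l<k. us ! l $ i * c l)"
  using assms by (simp add: scalar_prod_def mat_of_cols_index row_def atLeast0LessThan)

lemma orthonormal_rows_normalize:
  fixes w :: "nat \<Rightarrow> nat \<Rightarrow> complex"
  assumes orth: "\<And>l m. l < k \<Longrightarrow> m < k \<Longrightarrow> l \<noteq> m \<Longrightarrow> (\<Sum>i<n. w l i * cnj (w m i)) = 0"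
    and nz: "\<And>l. l < k \<Longrightarrow> (\<Sum>i<n. w l i * cnj (w l i)) \<noteq> 0"
  obtains u where "orthonormal_rows n k u"
    "\<And>l i j. l < k \<Longrightarrow> u (l,i) * cnj (u (l,j)) = w l i * cnj (w l j) / (\<Sum>i<n. w l i * cnj (w l i))"
proof -
  define nr where "nr l = (\<Sum>i<n. (cmod (w l i))\<^sup>2)" for l
  have Gnr: "(\<Sum>i<n. w l i * cnj (w l i)) = complex_of_real (nr l)" for l
    unfolding nr_def by (simp only: of_real_sum complex_norm_square)
  have nr0: "0 < nr l" if "l < k" for l
  proof -
    have "nr l \<noteq> 0" using nz[OF that] unfolding Gnr by simp
    moreover have "0 \<le> nr l" unfolding nr_def by (simp add: sum_nonneg)
    ultimately show ?thesis by simp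
  qed
  have sq: "complex_of_real (sqrt (nr l)) * complex_of_real (sqrt (nr l)) = complex_of_real (nr l)"
    if "l < k" for l
    using nr0[OF that] by (simp flip: of_real_mult)
  define u where "u p = w (fst p) (snd p) / complex_of_real (sqrt (nr (fst p)))" for p
  have uu: "u (l,i) * cnj (u (m,j)) = w l i * cnj (w m j) / complex_of_real (sqrt (nr l) * sqrt (nr m))"
    for l m i j
    by (simp add: u_def)
  have "orthonormal_rows n k u"
    unfolding orthonormal_rows_def
  proof (intro allI impI)
    fix l m assume l: "l < k" and m: "m < k"
    have "(\<Sum>i<n. u (l,i) * cnj (u (m,i)))
        = (\<Sum>i<n. w l i * cnj (w m i)) / complex_of_real (sqrt (nr l) * sqrt (nr m))"
      unfolding uu by (simp add: sum_divide_distrib)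
    then show "(\<Sum>i<n. u (l,i) * cnj (u (m,i))) = (if l = m then 1 else 0)"
      using orth[OF l m] Gnr[of l] sq[OF l] nr0[OF l] by (auto simp flip: of_real_mult)
  qed
  moreover have "u (l,i) * cnj (u (l,j)) = w l i * cnj (w l j) / (\<Sum>i<n. w l i * cnj (w l i))"
    if "l < k" for l i j
    unfolding uu Gnr of_real_mult sq[OF that] ..
  ultimately show ?thesis using that by blast
qed

lemma orthogonal_projection_entries:
  fixes P :: "complex mat" and us :: "complex vec list"
  assumes P: "P \<in> carrier_mat n n" "mat_adjoint P = P"
    and us: "length us = k" "set us \<subseteq> carrier_vec n" "\<forall>u\<in>set us. P *\<^sub>v u = u"
      "\<forall>x\<in>carrier_vec n. \<exists>c. P *\<^sub>v x = mat_of_cols n us *\<^sub>v vec k c"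
    and orth: "\<And>l m. l < k \<Longrightarrow> m < k \<Longrightarrow> l \<noteq> m \<Longrightarrow> (\<Sum>i<n. us ! l $ i * cnj (us ! m $ i)) = 0"
    and nz: "\<And>l. l < k \<Longrightarrow> (\<Sum>i<n. us ! l $ i * cnj (us ! l $ i)) \<noteq> 0"
    and ij: "i < n" "j < n"
  shows "P $$ (i,j) = (\<Sum>l<k. us ! l $ i * cnj (us ! l $ j) / (\<Sum>i<n. us ! l $ i * cnj (us ! l $ i)))"
proof -
  define G where "G l m = (\<Sum>i<n. us ! l $ i * cnj (us ! m $ i))" for l m
  have usl: "us ! l \<in> carrier_vec n" if "l < k" for l using us(1,2) that by auto
  obtain c where c: "P *\<^sub>v unit_vec n j = mat_of_cols n us *\<^sub>v vec k c"
    using us(4) unit_vec_carrier by blast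
  have Pc: "P $$ (i',j) = (\<Sum>l<k. us ! l $ i' * c l)" if "i' < n" for i'
  proof -
    have "P $$ (i',j) = (P *\<^sub>v unit_vec n j) $ i'" using P that ij by simp
    then show ?thesis using c mat_of_cols_mult_vec_index[OF that us(1)] by simp
  qed
  have cm: "c m = cnj (us ! m $ j) / G m m" if m: "m < k" for m
  proof -
    have "(\<Sum>i'<n. P $$ (i',j) * cnj (us ! m $ i')) = (\<Sum>l<k. c l * G l m)"
      by (simp add: Pc G_def sum_distrib_left sum_distrib_right sum.swap[of _ "{..<n}"] ac_simps)
    also have "\<dots> = c m * G m m"
      by (subst sum.remove[of _ m]) (use m orth in \<open>auto simp: G_def intro!: sum.neutral\<close>)
    finally have e1: "(\<Sum>i'<n. P $$ (i',j) * cnj (us ! m $ i')) = c m * G m m" .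
    have herm: "P $$ (i',j) = cnj (P $$ (j,i'))" if "i' < n" for i'
      using mat_adjoint_index[OF P(1) that ij(2)] P(2) by simp
    have "(\<Sum>i'<n. P $$ (i',j) * cnj (us ! m $ i')) = cnj (\<Sum>i'<n. P $$ (j,i') * us ! m $ i')"
      by (simp add: cnj_sum herm)
    also have "(\<Sum>i'<n. P $$ (j,i') * us ! m $ i') = (P *\<^sub>v us ! m) $ j"
      using P ij usl[OF m] by (simp add: scalar_prod_def row_def atLeast0LessThan)
    also have "\<dots> = us ! m $ j" using us(3) us(1) m by simp
    finally have "c m * G m m = cnj (us ! m $ j)" using e1 by simp
    then show ?thesis using nz[OF m] unfolding G_def by (simp add: field_simps)
  qed
  show ?thesis using Pc[OF ij(1)] cm by (simp add: G_def)
qed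

lemma orth_proj_rank_decomp:
  fixes P :: "complex mat"
  assumes "orth_proj_rank n k P"
  obtains u where "orthonormal_rows n k u"
    "\<And>i j. i < n \<Longrightarrow> j < n \<Longrightarrow> P $$ (i,j) = (\<Sum>l<k. u (l,i) * cnj (u (l,j)))"
proof -
  have P: "P \<in> carrier_mat n n" "mat_adjoint P = P" and idem: "P * P = P"
    and rk: "vec_space.rank n P = k"
    using assms unfolding orth_proj_rank_def by auto
  obtain us where us: "length us = k" "set us \<subseteq> carrier_vec n" "corthogonal us" "\<forall>u\<in>set us. P *\<^sub>v u = u"
    "\<forall>x\<in>carrier_vec n. \<exists>c. P *\<^sub>v x = mat_of_cols n us *\<^sub>v vec k c"
    using cof_vec_space.idempotent_orthogonal_basis_mat_of_cols[OF P(1) idem rk] by blast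
  have G: "(\<Sum>i<n. us ! l $ i * cnj (us ! m $ i)) = 0 \<longleftrightarrow> l \<noteq> m" if "l < k" "m < k" for l m
  proof -
    have "us ! m \<in> carrier_vec n" using us(1,2) that by auto
    then have "(\<Sum>i<n. us ! l $ i * cnj (us ! m $ i)) = us ! l \<bullet>c us ! m"
      by (simp add: scalar_prod_def atLeast0LessThan)
    then show ?thesis using corthogonalD[OF us(3), of l m] that us(1) by simp
  qed
  obtain u where u: "orthonormal_rows n k u"
    and uu: "\<And>l i j. l < k \<Longrightarrow> u (l,i) * cnj (u (l,j))
               = us ! l $ i * cnj (us ! l $ j) / (\<Sum>i<n. us ! l $ i * cnj (us ! l $ i))"
    using orthonormal_rows_normalize[where w="\<lambda>l i. us ! l $ i" and k=k and n=n] G by blast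
  show ?thesis
    using that[OF u] orthogonal_projection_entries[OF P us(1,2,4,5)] G uu by simp
qed

lemma times_times_mat_index_sum:
  fixes A C :: "complex mat"
  assumes A: "A \<in> carrier_mat m m" and C: "C \<in> carrier_mat m m" and rs: "r < m" "s < m"
  shows "(A * C * A) $$ (r,s) = (\<Sum>b<m. (\<Sum>a<m. A $$ (r,a) * C $$ (a,b)) * A $$ (b,s))"
proof -
  have "(A*C*A) $$ (r,s) = (\<Sum>b<m. (A*C) $$ (r,b) * A $$ (b,s))"
    by (rule times_mat_index_sum[OF mult_carrier_mat[OF A C] A rs])
  also have "\<dots> = (\<Sum>b<m. (\<Sum>a<m. A $$ (r,a) * C $$ (a,b)) * A $$ (b,s))"
    by (intro sum.cong refl arg_cong2[where f="(*)"]) (use rs in \<open>simp add: times_mat_index_sum[OF A C]\<close>)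
  finally show ?thesis .
qed

lemma mat_adjoint_eq_if_entries:
  fixes A :: "complex mat"
  assumes "A \<in> carrier_mat m m" "\<And>i j. i < m \<Longrightarrow> j < m \<Longrightarrow> A $$ (i,j) = cnj (A $$ (j,i))"
  shows "mat_adjoint A = A"
proof (rule eq_matI)
  show "dim_row (mat_adjoint A) = dim_row A" "dim_col (mat_adjoint A) = dim_col A"
    using mat_adjoint_carrier[OF assms(1)] assms(1) by auto
  fix i j assume "i < dim_row A" "j < dim_col A"
  then have ij: "i < m" "j < m" using assms(1) by auto
  show "mat_adjoint A $$ (i,j) = A $$ (i,j)"
    using mat_adjoint_index[OF assms(1) ij] assms(2)[OF ij] by simp
qed

lemma hermitian_entries_sandwich:
  fixes A C :: "complex mat"
  assumes A: "A \<in> carrier_mat m m" and C: "C \<in> carrier_mat m m"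
    and hA: "\<And>i j. i < m \<Longrightarrow> j < m \<Longrightarrow> cnj (A $$ (i,j)) = A $$ (j,i)"
    and hC: "\<And>i j. i < m \<Longrightarrow> j < m \<Longrightarrow> cnj (C $$ (i,j)) = C $$ (j,i)"
    and ij: "i < m" "j < m"
  shows "(A * C * A) $$ (i,j) = cnj ((A * C * A) $$ (j,i))"
proof -
  have "cnj ((A * C * A) $$ (j,i)) = (\<Sum>b<m. (\<Sum>a<m. A $$ (a,j) * C $$ (b,a)) * A $$ (i,b))"
    using ij by (simp add: times_times_mat_index_sum[OF A C] cnj_sum hA hC)
  also have "\<dots> = (\<Sum>b<m. \<Sum>a<m. A $$ (i,b) * C $$ (b,a) * A $$ (a,j))"
    by (simp add: sum_distrib_right sum_distrib_left ac_simps)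
  also have "\<dots> = (\<Sum>a<m. \<Sum>b<m. A $$ (i,b) * C $$ (b,a) * A $$ (a,j))"
    by (rule sum.swap)
  also have "\<dots> = (A * C * A) $$ (i,j)"
    using ij by (simp add: times_times_mat_index_sum[OF A C] sum_distrib_right)
  finally show ?thesis by simp
qed

lemma sum_sandwich_conj:
  fixes T X :: "nat \<Rightarrow> nat \<Rightarrow> complex" and v :: "nat \<Rightarrow> complex"
  assumes hT: "\<And>r s. r < m \<Longrightarrow> s < m \<Longrightarrow> cnj (T r s) = T s r"
  shows "(\<Sum>r<m. (\<Sum>s<m. (\<Sum>b<m. (\<Sum>a<m. T r a * X a b) * T b s) * v s) * cnj (v r))
       = (\<Sum>a<m. \<Sum>b<m. X a b * (\<Sum>s<m. T b s * v s) * cnj (\<Sum>r<m. T a r * v r))"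
proof -
  have "(\<Sum>a<m. \<Sum>b<m. X a b * (\<Sum>s<m. T b s * v s) * cnj (\<Sum>r<m. T a r * v r))
      = (\<Sum>a<m. \<Sum>b<m. X a b * (\<Sum>s<m. T b s * v s) * (\<Sum>r<m. T r a * cnj (v r)))"
    by (intro sum.cong refl arg_cong2[where f="(*)"]) (simp add: cnj_sum hT)
  also have "\<dots> = (\<Sum>a<m. \<Sum>b<m. \<Sum>s<m. \<Sum>r<m. T r a * X a b * T b s * v s * cnj (v r))"
    by (simp add: sum_distrib_left sum_distrib_right ac_simps)
  also have "\<dots> = (\<Sum>r<m. \<Sum>s<m. \<Sum>b<m. \<Sum>a<m. T r a * X a b * T b s * v s * cnj (v r))"
  proof -
    have "(\<Sum>a<m. \<Sum>b<m. \<Sum>s<m. \<Sum>r<m. T r a * X a b * T b s * v s * cnj (v r))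
        = (\<Sum>a<m. \<Sum>b<m. \<Sum>r<m. \<Sum>s<m. T r a * X a b * T b s * v s * cnj (v r))"
      by (rule sum.cong[OF refl], rule sum.cong[OF refl], rule sum.swap)
    also have "\<dots> = (\<Sum>a<m. \<Sum>r<m. \<Sum>b<m. \<Sum>s<m. T r a * X a b * T b s * v s * cnj (v r))"
      by (rule sum.cong[OF refl], rule sum.swap)
    also have "\<dots> = (\<Sum>r<m. \<Sum>a<m. \<Sum>b<m. \<Sum>s<m. T r a * X a b * T b s * v s * cnj (v r))"
      by (rule sum.swap)
    also have "\<dots> = (\<Sum>r<m. \<Sum>a<m. \<Sum>s<m. \<Sum>b<m. T r a * X a b * T b s * v s * cnj (v r))"
      by (rule sum.cong[OF refl], rule sum.cong[OF refl], rule sum.swap)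
    also have "\<dots> = (\<Sum>r<m. \<Sum>s<m. \<Sum>a<m. \<Sum>b<m. T r a * X a b * T b s * v s * cnj (v r))"
      by (rule sum.cong[OF refl], rule sum.swap)
    also have "\<dots> = (\<Sum>r<m. \<Sum>s<m. \<Sum>b<m. \<Sum>a<m. T r a * X a b * T b s * v s * cnj (v r))"
      by (rule sum.cong[OF refl], rule sum.cong[OF refl], rule sum.swap)
    finally show ?thesis .
  qed
  also have "\<dots> = (\<Sum>r<m. (\<Sum>s<m. (\<Sum>b<m. (\<Sum>a<m. T r a * X a b) * T b s) * v s) * cnj (v r))"
    by (simp add: sum_distrib_left sum_distrib_right ac_simps)
  finally show ?thesis by simp
qed

lemma quadratic_form_sandwich:
  fixes T X :: "complex mat"
  assumes T: "T \<in> carrier_mat m m" and X: "X \<in> carrier_mat m m" and v: "v \<in> carrier_vec m"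
    and hT: "\<And>r s. r < m \<Longrightarrow> s < m \<Longrightarrow> cnj (T $$ (r,s)) = T $$ (s,r)"
  shows "((T * X * T) *\<^sub>v v) \<bullet>c v = (\<Sum>a<m. \<Sum>b<m. X $$ (a,b) * (T *\<^sub>v v) $ b * cnj ((T *\<^sub>v v) $ a))"
proof -
  have Tv: "(T *\<^sub>v v) $ b = (\<Sum>s<m. T $$ (b,s) * v $ s)" if "b < m" for b
    by (rule mult_mat_vec_index_sum[OF T v that])
  have TXT: "T * X * T \<in> carrier_mat m m" using T X by simp
  have "((T * X * T) *\<^sub>v v) \<bullet>c v = (\<Sum>r<m. ((T * X * T) *\<^sub>v v) $ r * cnj (v $ r))"
    by (rule cscalar_prod_sum[OF v])
  also have "\<dots> = (\<Sum>r<m. (\<Sum>s<m. (\<Sum>b<m. (\<Sum>a<m. T $$ (r,a) * X $$ (a,b)) * T $$ (b,s)) * v $ s) * cnj (v $ r))"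
    by (intro sum.cong refl arg_cong2[where f="(*)"])
       (auto simp: mult_mat_vec_index_sum[OF TXT v] times_times_mat_index_sum[OF T X] intro!: sum.cong)
  also have "\<dots> = (\<Sum>a<m. \<Sum>b<m. X $$ (a,b) * (\<Sum>s<m. T $$ (b,s) * v $ s) * cnj (\<Sum>r<m. T $$ (a,r) * v $ r))"
    by (rule sum_sandwich_conj) (rule hT)
  also have "\<dots> = (\<Sum>a<m. \<Sum>b<m. X $$ (a,b) * (T *\<^sub>v v) $ b * cnj ((T *\<^sub>v v) $ a))"
    by (intro sum.cong refl) (simp add: Tv)
  finally show ?thesis .
qed

lemma quadratic_form_one_plus_gram:
  fixes b :: "nat \<Rightarrow> nat \<Rightarrow> complex" and w :: "nat \<Rightarrow> complex" and \<alpha> :: real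
  shows "(\<Sum>a<m. \<Sum>c<m. ((if a = c then 1 else 0) + complex_of_real \<alpha> * (\<Sum>i<d. cnj (b i a) * b i c))
            * w c * cnj (w a))
       = complex_of_real ((l2norm {..<m} w)\<^sup>2 + \<alpha> * (image_norm b d m w)\<^sup>2)"
proof -
  have "(\<Sum>a<m. \<Sum>c<m. (if a = c then 1 else 0) * w c * cnj (w a))
      = (\<Sum>a<m. \<Sum>c<m. if a = c then w a * cnj (w a) else 0)"
    by (intro sum.cong refl) auto
  then have "(\<Sum>a<m. \<Sum>c<m. (if a = c then 1 else 0) * w c * cnj (w a)) = (\<Sum>a<m. w a * cnj (w a))"
    by simp
  moreover have "(\<Sum>a<m. \<Sum>c<m. (\<Sum>i<d. cnj (b i a) * b i c) * w c * cnj (w a))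
      = (\<Sum>i<d. (\<Sum>c<m. b i c * w c) * cnj (\<Sum>a<m. b i a * w a))"
    by (simp add: cnj_sum sum_distrib_left sum_distrib_right ac_simps sum.swap[of _ "{..<d}"])
  ultimately show ?thesis
    unfolding image_norm_def of_real_add of_real_mult of_real_l2norm_power2
    by (simp add: distrib_right sum.distrib sum_distrib_left[symmetric] mult.assoc)
qed

lemma tensor_id_carrier: "tensor_id n N P \<in> carrier_mat (n*N) (n*N)"
  unfolding tensor_id_def by simp

lemma tensor_id_index:
  "r < n*N \<Longrightarrow> s < n*N \<Longrightarrow>
     tensor_id n N P $$ (r,s) = (if r mod N = s mod N then P $$ (r div N, s div N) else 0)"
  unfolding tensor_id_def by simp

lemma tensor_id_mult_vec_eq_tensor_sum:
  assumes N: "N > 0" and v: "v \<in> carrier_vec (n*N)" and s: "s < n*N"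
    and P: "\<And>i j. i < n \<Longrightarrow> j < n \<Longrightarrow> P $$ (i,j) = (\<Sum>l<k. u (l,i) * cnj (u (l,j)))"
  shows "(tensor_id n N P *\<^sub>v v) $ s
           = tensor_sum N k u (\<lambda>p. \<Sum>j<n. cnj (u (fst p, j)) * v $ (j*N + snd p)) s"
proof -
  have sn: "s div N < n" using s by (simp add: less_mult_imp_div_less)
  have idx: "j*N + a < n*N" if "j < n" "a < N" for j a
  proof -
    have "j*N + a < (j+1)*N" using that by simp
    also have "\<dots> \<le> n*N" using that by (intro mult_right_mono) auto
    finally show ?thesis .
  qed
  have "(tensor_id n N P *\<^sub>v v) $ s = (\<Sum>j<n. \<Sum>a<N. tensor_id n N P $$ (s, j*N + a) * v $ (j*N + a))"
    using mult_mat_vec_index_sum[OF tensor_id_carrier v s] by (simp add: sum_lessThan_mult_eq)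
  also have "\<dots> = (\<Sum>j<n. \<Sum>a<N. if a = s mod N then P $$ (s div N, j) * v $ (j*N + s mod N) else 0)"
    using s idx by (intro sum.cong refl) (auto simp: tensor_id_index)
  also have "\<dots> = (\<Sum>j<n. \<Sum>l<k. u (l, s div N) * cnj (u (l,j)) * v $ (j*N + s mod N))"
    using N P sn by (simp add: sum_distrib_right)
  also have "\<dots> = tensor_sum N k u (\<lambda>p. \<Sum>j<n. cnj (u (fst p, j)) * v $ (j*N + snd p)) s"
    unfolding tensor_sum_def by (simp add: sum.swap[of _ "{..<n}"] sum_distrib_left mult.assoc)
  finally show ?thesis .
qed

lemma one_plus_gram_index:
  fixes B :: "complex mat" and \<alpha> :: real
  assumes B: "B \<in> carrier_mat d m" and ac: "a < m" "c < m"
  shows "(1\<^sub>m m + complex_of_real \<alpha> \<cdot>\<^sub>m (mat_adjoint B * B)) $$ (a,c)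
           = (if a = c then 1 else 0) + complex_of_real \<alpha> * (\<Sum>i<d. cnj (B $$ (i,a)) * B $$ (i,c))"
proof -
  have B': "mat_adjoint B \<in> carrier_mat m d" by (rule mat_adjoint_carrier[OF B])
  have "(mat_adjoint B * B) $$ (a,c) = (\<Sum>i<d. mat_adjoint B $$ (a,i) * B $$ (i,c))"
    by (rule times_mat_index_sum[OF B' B ac])
  also have "\<dots> = (\<Sum>i<d. cnj (B $$ (i,a)) * B $$ (i,c))"
    using mat_adjoint_index[OF B] ac by (intro sum.cong refl) auto
  finally show ?thesis using ac B' B by simp
qed

lemma quadratic_form_sandwich_one_plus_gram:
  fixes B T :: "complex mat" and \<alpha> :: real
  assumes B: "B \<in> carrier_mat d m" and T: "T \<in> carrier_mat m m" and v: "v \<in> carrier_vec m"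
    and hT: "\<And>r s. r < m \<Longrightarrow> s < m \<Longrightarrow> cnj (T $$ (r,s)) = T $$ (s,r)"
  shows "((T * (1\<^sub>m m + complex_of_real \<alpha> \<cdot>\<^sub>m (mat_adjoint B * B)) * T) *\<^sub>v v) \<bullet>c v
           = complex_of_real ((l2norm {..<m} (\<lambda>j. (T *\<^sub>v v) $ j))\<^sup>2
               + \<alpha> * (image_norm (\<lambda>i j. B $$ (i,j)) d m (\<lambda>j. (T *\<^sub>v v) $ j))\<^sup>2)"
proof -
  define X where "X = 1\<^sub>m m + complex_of_real \<alpha> \<cdot>\<^sub>m (mat_adjoint B * B)"
  have X: "X \<in> carrier_mat m m" unfolding X_def using mat_adjoint_carrier[OF B] B by auto
  have "((T * X * T) *\<^sub>v v) \<bullet>c v = (\<Sum>a<m. \<Sum>c<m. X $$ (a,c) * (T *\<^sub>v v) $ c * cnj ((T *\<^sub>v v) $ a))"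
    by (rule quadratic_form_sandwich[OF T X v hT])
  also have "\<dots> = (\<Sum>a<m. \<Sum>c<m. ((if a = c then 1 else 0)
                + complex_of_real \<alpha> * (\<Sum>i<d. cnj (B $$ (i,a)) * B $$ (i,c))) * (T *\<^sub>v v) $ c * cnj ((T *\<^sub>v v) $ a))"
    unfolding X_def by (intro sum.cong refl) (simp add: one_plus_gram_index[OF B])
  also have "\<dots> = complex_of_real ((l2norm {..<m} (\<lambda>j. (T *\<^sub>v v) $ j))\<^sup>2
               + \<alpha> * (image_norm (\<lambda>i j. B $$ (i,j)) d m (\<lambda>j. (T *\<^sub>v v) $ j))\<^sup>2)"
    by (rule quadratic_form_one_plus_gram)
  finally show ?thesis unfolding X_def .
qed

lemma tensor_id_cnj_index:
  assumes "orth_proj_rank n k P" "r < n*N" "s < n*N"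
  shows "cnj (tensor_id n N P $$ (r,s)) = tensor_id n N P $$ (s,r)"
proof -
  have "P \<in> carrier_mat n n" "mat_adjoint P = P" using assms(1) unfolding orth_proj_rank_def by auto
  then show ?thesis
    using assms(2,3) mat_adjoint_index[of P n n "s div N" "r div N"]
    by (auto simp: tensor_id_index less_mult_imp_div_less)
qed

lemma psd_sandwich_of_image_norm_le:
  fixes B P :: "complex mat" and \<alpha> :: real
  assumes N: "N > 0" and B: "B \<in> carrier_mat d (n*N)" and P: "orth_proj_rank n k P" and \<alpha>: "\<alpha> < 0"
    and H: "\<And>u f. orthonormal_rows n k u \<Longrightarrow> image_norm (\<lambda>i j. B $$ (i,j)) d (n*N) (tensor_sum N k u f)
              \<le> sqrt (-1/\<alpha>) * l2norm {..<n*N} (tensor_sum N k u f)"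
  shows "psd_mat (n*N) (tensor_id n N P * (1\<^sub>m (n*N) + complex_of_real \<alpha> \<cdot>\<^sub>m (mat_adjoint B * B)) * tensor_id n N P)"
proof -
  define m where "m = n*N"
  define T where "T = tensor_id n N P"
  define X where "X = 1\<^sub>m m + complex_of_real \<alpha> \<cdot>\<^sub>m (mat_adjoint B * B)"
  have B: "B \<in> carrier_mat d m" using B unfolding m_def .
  have T: "T \<in> carrier_mat m m" unfolding T_def m_def by (rule tensor_id_carrier)
  have hT: "cnj (T $$ (r,s)) = T $$ (s,r)" if "r < m" "s < m" for r s
    using tensor_id_cnj_index[OF P] that unfolding T_def m_def by blast
  have X: "X \<in> carrier_mat m m" unfolding X_def using mat_adjoint_carrier[OF B] B by auto
  have hX: "cnj (X $$ (a,c)) = X $$ (c,a)" if "a < m" "c < m" for a c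
    using that unfolding X_def by (simp add: one_plus_gram_index[OF B] cnj_sum mult.commute)
  have TXT: "T * X * T \<in> carrier_mat m m" using T X by simp
  have "mat_adjoint (T * X * T) = T * X * T"
    by (rule mat_adjoint_eq_if_entries[OF TXT], rule hermitian_entries_sandwich[OF T X hT hX])
  moreover have "\<exists>r\<ge>0. ((T * X * T) *\<^sub>v v) \<bullet>c v = complex_of_real r" if v: "v \<in> carrier_vec m" for v
  proof -
    define w where "w j = (T *\<^sub>v v) $ j" for j
    obtain u where u: "orthonormal_rows n k u"
      and Pu: "\<And>i j. i < n \<Longrightarrow> j < n \<Longrightarrow> P $$ (i,j) = (\<Sum>l<k. u (l,i) * cnj (u (l,j)))"
      using orth_proj_rank_decomp[OF P] by blast
    define f where "f p = (\<Sum>j<n. cnj (u (fst p, j)) * v $ (j*N + snd p))" for p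
    have "w j = tensor_sum N k u f j" if "j < m" for j
      unfolding w_def f_def T_def
      by (rule tensor_id_mult_vec_eq_tensor_sum[OF N v[unfolded m_def] that[unfolded m_def] Pu])
    then have "image_norm (\<lambda>i j. B $$ (i,j)) d m w \<le> sqrt (-1/\<alpha>) * l2norm {..<m} w"
      using H[OF u, of f] unfolding m_def by (metis (no_types, lifting) image_norm_cong l2norm_cong lessThan_iff)
    then have "(image_norm (\<lambda>i j. B $$ (i,j)) d m w)\<^sup>2 \<le> (sqrt (-1/\<alpha>) * l2norm {..<m} w)\<^sup>2"
      by (rule power_mono) simp
    also have "\<dots> = (-1/\<alpha>) * (l2norm {..<m} w)\<^sup>2" using \<alpha> by (simp add: power_mult_distrib)
    finally have "0 \<le> (l2norm {..<m} w)\<^sup>2 + \<alpha> * (image_norm (\<lambda>i j. B $$ (i,j)) d m w)\<^sup>2"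
      using \<alpha> mult_left_mono_neg[of _ _ \<alpha>] by (fastforce simp: field_simps)
    then show ?thesis
      using quadratic_form_sandwich_one_plus_gram[OF B T v hT, of \<alpha>] unfolding X_def w_def by blast
  qed
  ultimately show ?thesis
    unfolding psd_mat_def using TXT unfolding T_def X_def m_def by auto
qed

section \<open>Almost sure block positivity\<close>

lemma k_block_positive_of_net_bound:
  fixes B :: "complex mat"
  assumes eps: "0 < \<epsilon>" "\<epsilon> \<le> 1/6" and a: "0 \<le> a" and \<alpha>: "\<alpha> < 0"
    and ac: "sqrt a * (1 + 12 * \<epsilon> * sqrt k) \<le> sqrt (-1/\<alpha>)"
    and nN: "n > 0" "N > 0" "k > 0" and B: "B \<in> carrier_mat d (n*N)"
    and net: "\<And>u f. u \<in> row_net n k \<epsilon> \<Longrightarrow> f \<in> coef_net N k \<epsilon> \<Longrightarrow>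
              (\<Sum>i<d. (cmod (\<Sum>j<n*N. B $$ (i,j) * tensor_sum N k u f j))\<^sup>2)
                \<le> a * (\<Sum>j<n*N. (cmod (tensor_sum N k u f j))\<^sup>2)"
  shows "k_block_positive n N k (1\<^sub>m (n*N) + complex_of_real \<alpha> \<cdot>\<^sub>m (mat_adjoint B * B))"
proof -
  define b where "b i j = B $$ (i,j)" for i j
  have "image_norm b d (n*N) (tensor_sum N k u f) \<le> sqrt a * l2norm {..<n*N} (tensor_sum N k u f)"
    if "u \<in> row_net n k \<epsilon>" "f \<in> coef_net N k \<epsilon>" for u f
  proof -
    have "(image_norm b d (n*N) (tensor_sum N k u f))\<^sup>2 \<le> a * (l2norm {..<n*N} (tensor_sum N k u f))\<^sup>2"
      using net[OF that] unfolding image_norm_def l2norm_power2 b_def .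
    then have "image_norm b d (n*N) (tensor_sum N k u f) \<le> sqrt (a * (l2norm {..<n*N} (tensor_sum N k u f))\<^sup>2)"
      by (rule real_le_rsqrt)
    then show ?thesis by (simp add: real_sqrt_mult)
  qed
  then have "image_norm b d (n*N) (tensor_sum N k u f) \<le> sqrt (-1/\<alpha>) * l2norm {..<n*N} (tensor_sum N k u f)"
    if "orthonormal_rows n k u" for u f
    by (rule image_norm_tensor_sum_orthonormal_le[OF eps a ac nN _ that])
  then show ?thesis
    unfolding k_block_positive_def b_def using psd_sandwich_of_image_norm_le[OF nN(2) B _ \<alpha>] by blast
qed

definition tensor_net :: "nat \<Rightarrow> nat \<Rightarrow> nat \<Rightarrow> real \<Rightarrow> (nat \<Rightarrow> complex) set" where
  "tensor_net n N k \<epsilon> = (\<lambda>(u,f). tensor_sum N k u f) ` (row_net n k \<epsilon> \<times> coef_net N k \<epsilon>)"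

lemma card_tensor_net:
  assumes eps: "0 < \<epsilon>" and nN: "n > 0" "N > 0" "k > 0"
  shows "finite (tensor_net n N k \<epsilon>)"
    and "real (card (tensor_net n N k \<epsilon>)) \<le> real (card (row_net n k \<epsilon>)) * exp (real (k*N) * (4/\<epsilon>\<^sup>2 + ln 16))"
proof -
  note U = finite_row_net[OF eps nN(1), of k] and F = card_coef_net[OF eps nN(2,3)]
  show "finite (tensor_net n N k \<epsilon>)" unfolding tensor_net_def using U F(1) by simp
  have "card (tensor_net n N k \<epsilon>) \<le> card (row_net n k \<epsilon>) * card (coef_net N k \<epsilon>)"
    unfolding tensor_net_def card_cartesian_product[symmetric] by (rule card_image_le) (use U F(1) in simp)
  then have "real (card (tensor_net n N k \<epsilon>)) \<le> real (card (row_net n k \<epsilon>)) * real (card (coef_net N k \<epsilon>))"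
    by (simp flip: of_nat_mult)
  also have "\<dots> \<le> real (card (row_net n k \<epsilon>)) * (exp (4 * real (k*N) / \<epsilon>\<^sup>2) * 16 ^ (k*N))"
    using F(2) by (intro mult_left_mono) auto
  also have "exp (4 * real (k*N) / \<epsilon>\<^sup>2) * 16 ^ (k*N) = exp (real (k*N) * (4/\<epsilon>\<^sup>2 + ln 16))"
  proof -
    have "exp (real (k*N) * ln 16) = exp (ln 16) ^ (k*N)" by (rule exp_of_nat_mult)
    then have "(16::real) ^ (k*N) = exp (real (k*N) * ln 16)" by simp
    then show ?thesis by (simp add: mult_exp_exp distrib_left)
  qed
  finally show "real (card (tensor_net n N k \<epsilon>)) \<le> real (card (row_net n k \<epsilon>)) * exp (real (k*N) * (4/\<epsilon>\<^sup>2 + ln 16))" .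
qed

text \<open>Union bound: each net point fails with probability exp (- n N kappa), while the net has
  O (exp (k N (4 / eps^2 + ln 16))) points. This is where n has to be large compared to k.\<close>

lemma (in prob_space) measure_net_excess_le:
  assumes cg: "complex_gaussian_matrix M (1 / real (n*N)) r (n*N) B"
    and eps: "0 < \<epsilon>" and nN: "n > 0" "N > 0" "k > 0" and q: "0 < q" "q < 1"
    and r: "real r \<le> \<rho> * real (n*N)"
    and kap: "\<kappa> \<le> (q * a + \<rho> * ln (1 - q)) / 2"
    and nk: "real k * (4/\<epsilon>\<^sup>2 + ln 16) + 1 \<le> real n * \<kappa>"
  defines "E \<equiv> \<Union>y\<in>tensor_net n N k \<epsilon>. {\<omega>\<in>space M.
             a * (\<Sum>j<n*N. (cmod (y j))\<^sup>2) < (\<Sum>i<r. (cmod (\<Sum>j<n*N. B \<omega> $$ (i,j) * y j))\<^sup>2)}"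
  shows "E \<in> events" and "measure M E \<le> real (card (row_net n k \<epsilon>)) * exp (- real N)"
proof -
  define Ev where "Ev y = {\<omega>\<in>space M.
             a * (\<Sum>j<n*N. (cmod (y j))\<^sup>2) < (\<Sum>i<r. (cmod (\<Sum>j<n*N. B \<omega> $$ (i,j) * y j))\<^sup>2)}" for y
  define CU where "CU = real (card (row_net n k \<epsilon>))"
  define Cn where "Cn = 4/\<epsilon>\<^sup>2 + ln 16"
  note tail = complex_gaussian_image_norm_tail[OF cg _ q r, of a, folded Ev_def]
  note net = card_tensor_net[OF eps nN, folded CU_def Cn_def]
  show "E \<in> events" unfolding E_def using tail(1) nN net(1) by (auto simp: Ev_def[symmetric])
  have "measure M E \<le> (\<Sum>y\<in>tensor_net n N k \<epsilon>. measure M (Ev y))"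
    unfolding E_def Ev_def[symmetric] using tail(1) nN by (intro measure_UNION_le net(1)) auto
  also have "\<dots> \<le> (\<Sum>y\<in>tensor_net n N k \<epsilon>. exp (- real (n*N) * \<kappa>))"
  proof (intro sum_mono order_trans[OF tail(2)])
    show "exp (- real (n*N) * (q * a + \<rho> * ln (1 - q)) / 2) \<le> exp (- real (n*N) * \<kappa>)"
      using mult_left_mono[OF kap, of "real (n*N)"] by simp
  qed (use nN in auto)
  also have "\<dots> \<le> CU * exp (real (k*N) * Cn) * exp (- real (n*N) * \<kappa>)"
    using net(2) by (simp add: mult_right_mono)
  also have "\<dots> = CU * exp (real N * (real k * Cn - real n * \<kappa>))"
    by (simp add: mult.assoc mult_exp_exp algebra_simps)
  also have "\<dots> \<le> CU * exp (- real N)"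
  proof (intro mult_left_mono exp_mono)
    have "real N * (real k * Cn - real n * \<kappa>) \<le> real N * (-1)"
      using nk unfolding Cn_def by (intro mult_left_mono) auto
    then show "real N * (real k * Cn - real n * \<kappa>) \<le> - real N" by simp
  qed (simp add: CU_def)
  finally show "measure M E \<le> CU * exp (- real N)" .
qed

lemma (in prob_space) AE_eventually_net_bound:
  fixes B :: "nat \<Rightarrow> 'a \<Rightarrow> complex mat" and d :: "nat \<Rightarrow> nat"
  assumes eps: "0 < \<epsilon>" and k: "k > 0" and n: "n > 0" and q: "0 < q" "q < 1"
    and kap: "\<kappa> \<le> (q * a + \<rho> * ln (1 - q)) / 2"
    and nk: "real k * (4/\<epsilon>\<^sup>2 + ln 16) + 1 \<le> real n * \<kappa>"
    and lim: "((\<lambda>N. real (d N) / real (n * N)) \<longlongrightarrow> lam) sequentially" and lr: "lam < \<rho>"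
    and cg: "\<And>N. N \<ge> 1 \<Longrightarrow> complex_gaussian_matrix M (1 / real (n * N)) (d N) (n * N) (B N)"
  shows "AE \<omega> in M. \<exists>N0. \<forall>N\<ge>N0. \<forall>y\<in>tensor_net n N k \<epsilon>.
           (\<Sum>i<d N. (cmod (\<Sum>j<n*N. B N \<omega> $$ (i,j) * y j))\<^sup>2) \<le> a * (\<Sum>j<n*N. (cmod (y j))\<^sup>2)"
proof -
  obtain N1 where N1: "N1 > 0" "\<And>N. N \<ge> N1 \<Longrightarrow> real (d N) \<le> \<rho> * real (n*N)"
  proof -
    obtain N1 where N1: "\<And>N. N \<ge> N1 \<Longrightarrow> real (d N) / real (n * N) < \<rho>"
      using order_tendstoD(2)[OF lim lr] unfolding eventually_sequentially by blast
    show ?thesis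
    proof (rule that[of "max N1 1"])
      fix N assume "N \<ge> max N1 1"
      then have "real (d N) / real (n * N) < \<rho>" "0 < real (n * N)" using N1 n by auto
      then show "real (d N) \<le> \<rho> * real (n * N)" by (simp add: field_simps)
    qed simp
  qed
  define Fail where "Fail N = (if N1 \<le> N then \<Union>y\<in>tensor_net n N k \<epsilon>. {\<omega>\<in>space M.
      a * (\<Sum>j<n*N. (cmod (y j))\<^sup>2) < (\<Sum>i<d N. (cmod (\<Sum>j<n*N. B N \<omega> $$ (i,j) * y j))\<^sup>2)} else {})" for N
  define CU where "CU = real (card (row_net n k \<epsilon>))"
  have tail: "Fail N \<in> events \<and> measure M (Fail N) \<le> CU * exp (- real N)" for N
  proof (cases "N1 \<le> N")
    case True
    then show ?thesis
      using measure_net_excess_le[OF cg eps n _ k q N1(2) kap nk] N1(1)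
      unfolding Fail_def CU_def by auto
  qed (simp add: Fail_def CU_def)
  have "summable (\<lambda>N. exp (-1::real) ^ N)" by (rule summable_geometric) simp
  moreover have "exp (- real N) = exp (-1) ^ N" for N
    using exp_of_nat_mult[of N "-1"] by simp
  ultimately have "summable (\<lambda>N. CU * exp (- real N))" by (intro summable_mult) simp
  then have "summable (\<lambda>N. measure M (Fail N))"
    by (rule summable_comparison_test'[where N=0]) (use tail in auto)
  then have "AE \<omega> in M. eventually (\<lambda>N. \<omega> \<in> space M - Fail N) sequentially"
    using tail by (intro borel_cantelli_AE1) (auto simp: emeasure_eq_measure)
  moreover have "AE \<omega> in M. \<omega> \<in> space M" by (rule AE_space)
  ultimately show ?thesis
  proof eventually_elim
    case (elim \<omega>)
    then obtain N2 where N2: "\<And>N. N \<ge> N2 \<Longrightarrow> \<omega> \<notin> Fail N" unfolding eventually_sequentially by auto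
    show ?case
    proof (intro exI[of _ "max N1 N2"] allI impI ballI)
      fix N y assume N: "max N1 N2 \<le> N" and y: "y \<in> tensor_net n N k \<epsilon>"
      then have "\<omega> \<notin> Fail N" using N2 by simp
      then show "(\<Sum>i<d N. (cmod (\<Sum>j<n*N. B N \<omega> $$ (i,j) * y j))\<^sup>2) \<le> a * (\<Sum>j<n*N. (cmod (y j))\<^sup>2)"
        using N y elim unfolding Fail_def by (auto simp: not_less)
    qed
  qed
qed

lemma (in prob_space) AE_eventually_k_block_positive:
  fixes B :: "nat \<Rightarrow> 'a \<Rightarrow> complex mat" and d :: "nat \<Rightarrow> nat"
  assumes eps: "0 < \<epsilon>" "\<epsilon> \<le> 1/6" and a: "0 \<le> a" and \<alpha>: "\<alpha> < 0"
    and ac: "sqrt a * (1 + 12 * \<epsilon> * sqrt k) \<le> sqrt (-1/\<alpha>)"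
    and k: "k > 0" and n: "n > 0" and q: "0 < q" "q < 1"
    and kap: "\<kappa> \<le> (q * a + \<rho> * ln (1 - q)) / 2"
    and nk: "real k * (4/\<epsilon>\<^sup>2 + ln 16) + 1 \<le> real n * \<kappa>"
    and lim: "((\<lambda>N. real (d N) / real (n * N)) \<longlongrightarrow> lam) sequentially" and lr: "lam < \<rho>"
    and cg: "\<And>N. N \<ge> 1 \<Longrightarrow> complex_gaussian_matrix M (1 / real (n * N)) (d N) (n * N) (B N)"
  shows "AE \<omega> in M. \<exists>N0. \<forall>N\<ge>N0.
           k_block_positive n N k (1\<^sub>m (n * N) + complex_of_real \<alpha> \<cdot>\<^sub>m (mat_adjoint (B N \<omega>) * B N \<omega>))"
proof -
  have "AE \<omega> in M. \<exists>N0. \<forall>N\<ge>N0. \<forall>y\<in>tensor_net n N k \<epsilon>.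
      (\<Sum>i<d N. (cmod (\<Sum>j<n*N. B N \<omega> $$ (i,j) * y j))\<^sup>2) \<le> a * (\<Sum>j<n*N. (cmod (y j))\<^sup>2)"
    by (rule AE_eventually_net_bound[OF eps(1) k n q kap nk lim lr cg])
  moreover have "AE \<omega> in M. \<omega> \<in> space M" by (rule AE_space)
  ultimately show ?thesis
  proof eventually_elim
    case (elim \<omega>)
    then obtain N0 where N0: "\<And>N. N \<ge> N0 \<Longrightarrow> \<forall>y\<in>tensor_net n N k \<epsilon>.
        (\<Sum>i<d N. (cmod (\<Sum>j<n*N. B N \<omega> $$ (i,j) * y j))\<^sup>2) \<le> a * (\<Sum>j<n*N. (cmod (y j))\<^sup>2)" by blast
    show ?case
    proof (intro exI[of _ "max N0 1"] allI impI)
      fix N assume N: "max N0 1 \<le> N"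
      then have "B N \<omega> \<in> carrier_mat (d N) (n*N)"
        using cg[of N] elim unfolding complex_gaussian_matrix_def by auto
      then show "k_block_positive n N k (1\<^sub>m (n * N) + complex_of_real \<alpha> \<cdot>\<^sub>m (mat_adjoint (B N \<omega>) * B N \<omega>))"
        using N0[of N] N by (intro k_block_positive_of_net_bound[OF eps a \<alpha> ac n _ k])
          (auto simp: tensor_net_def)
    qed
  qed
qed

lemma ln_one_minus_excess_bound:
  fixes a \<rho> q :: real
  assumes \<rho>: "0 < \<rho>" and q: "0 < q" "q \<le> 1/2" "q \<le> (a - \<rho>) / (4 * \<rho>)"
  shows "q * (a - \<rho>) / 4 \<le> (q * a + \<rho> * ln (1 - q)) / 2"
proof -
  have "- q - 2 * q\<^sup>2 \<le> ln (1 - q)" by (rule ln_one_minus_pos_lower_bound) (use q in auto)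
  then have "\<rho> * (- q - 2 * q\<^sup>2) \<le> \<rho> * ln (1 - q)" using \<rho> by (intro mult_left_mono) auto
  moreover have "q * (2 * \<rho> * q) \<le> q * ((a - \<rho>) / 2)"
    using q \<rho> by (intro mult_left_mono) (auto simp: field_simps)
  ultimately show ?thesis by (simp add: power2_eq_square algebra_simps)
qed

lemma block_positivity_parameters:
  fixes lam c :: real and k :: nat
  assumes lam: "0 < lam" "lam < c" and k: "k > 0"
  obtains \<epsilon> a q \<kappa> \<rho> where "0 < \<epsilon>" "\<epsilon> \<le> 1/6" "0 \<le> a" "sqrt a * (1 + 12 * \<epsilon> * sqrt k) \<le> sqrt c"
    "0 < q" "q < 1" "0 < \<kappa>" "\<kappa> \<le> (q * a + \<rho> * ln (1 - q)) / 2" "lam < \<rho>"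
proof -
  define a where "a = (lam + c) / 2"
  define \<rho> where "\<rho> = (lam + a) / 2"
  have a: "0 < a" "a < c" and \<rho>: "0 < \<rho>" "lam < \<rho>" "\<rho> < a"
    using lam unfolding a_def \<rho>_def by (auto simp: field_simps)
  have sa: "0 < sqrt a" "sqrt a < sqrt c" using a by auto
  define \<epsilon> where "\<epsilon> = min (1/6) ((sqrt c / sqrt a - 1) / (12 * sqrt k))"
  have \<epsilon>: "0 < \<epsilon>" "\<epsilon> \<le> 1/6" unfolding \<epsilon>_def using sa k by (auto simp: field_simps)
  have "\<epsilon> \<le> (sqrt c / sqrt a - 1) / (12 * sqrt k)" unfolding \<epsilon>_def by simp
  then have "12 * \<epsilon> * sqrt k \<le> sqrt c / sqrt a - 1" using k by (simp add: field_simps)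
  then have "sqrt a * (1 + 12 * \<epsilon> * sqrt k) \<le> sqrt a * (sqrt c / sqrt a)"
    using sa by (intro mult_left_mono) auto
  then have ac: "sqrt a * (1 + 12 * \<epsilon> * sqrt k) \<le> sqrt c" using sa by simp
  define q where "q = min (1/2) ((a - \<rho>) / (4 * \<rho>))"
  have q: "0 < q" "q \<le> 1/2" "q \<le> (a - \<rho>) / (4 * \<rho>)" unfolding q_def using \<rho> by auto
  have "0 < q * (a - \<rho>) / 4" using q \<rho> by simp
  with \<epsilon> a ac q \<rho> show ?thesis
    by (intro that[of \<epsilon> a q "q * (a - \<rho>) / 4" \<rho>] ln_one_minus_excess_bound) auto
qed

lemma (in prob_space) eventually_AE_k_block_positive:
  fixes B :: "nat \<Rightarrow> nat \<Rightarrow> 'a \<Rightarrow> complex mat" and d :: "nat \<Rightarrow> nat \<Rightarrow> nat"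
  assumes \<alpha>: "\<alpha> < 0" and lam: "0 < lam" "lam < - 1 / \<alpha>" and k: "k > 0"
    and lim: "\<And>n. n \<ge> 1 \<Longrightarrow> ((\<lambda>N. real (d n N) / real (n * N)) \<longlongrightarrow> lam) sequentially"
    and cg: "\<And>n N. n \<ge> 1 \<Longrightarrow> N \<ge> 1 \<Longrightarrow>
               complex_gaussian_matrix M (1 / real (n * N)) (d n N) (n * N) (B n N)"
  shows "\<exists>n0. \<forall>n \<ge> n0. AE \<omega> in M. \<exists>N0. \<forall>N \<ge> N0.
           k_block_positive n N k (1\<^sub>m (n * N) + complex_of_real \<alpha> \<cdot>\<^sub>m (mat_adjoint (B n N \<omega>) * B n N \<omega>))"
proof -
  obtain \<epsilon> a q \<kappa> \<rho> where \<epsilon>: "0 < \<epsilon>" "\<epsilon> \<le> 1/6" and a: "0 \<le> a"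
    and ac: "sqrt a * (1 + 12 * \<epsilon> * sqrt k) \<le> sqrt (-1/\<alpha>)" and q: "0 < q" "q < 1"
    and \<kappa>: "0 < \<kappa>" "\<kappa> \<le> (q * a + \<rho> * ln (1 - q)) / 2" and \<rho>: "lam < \<rho>"
    using block_positivity_parameters[OF lam k] by blast
  obtain n0 :: nat where n0: "(real k * (4/\<epsilon>\<^sup>2 + ln 16) + 1) / \<kappa> \<le> real n0"
    using real_arch_simple by blast
  have "AE \<omega> in M. \<exists>N0. \<forall>N \<ge> N0.
          k_block_positive n N k (1\<^sub>m (n * N) + complex_of_real \<alpha> \<cdot>\<^sub>m (mat_adjoint (B n N \<omega>) * B n N \<omega>))"
    if "max n0 1 \<le> n" for n
  proof -
    have n: "n > 0" and "(real k * (4/\<epsilon>\<^sup>2 + ln 16) + 1) / \<kappa> \<le> real n" using that n0 by auto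
    then have nk: "real k * (4/\<epsilon>\<^sup>2 + ln 16) + 1 \<le> real n * \<kappa>" using \<kappa> by (simp add: field_simps)
    show ?thesis
      using lim[of n] cg[of n] n
      by (intro AE_eventually_k_block_positive[OF \<epsilon> a \<alpha> ac k n q \<kappa>(2) nk _ \<rho>]) auto
  qed
  then show ?thesis by blast
qed

text \<open>Only lam < -1/alpha enters the proof.\<close>

theorem proposition6p8:
  fixes M :: "'a measure" and lam \<alpha> :: real and d :: "nat \<Rightarrow> nat \<Rightarrow> nat"
    and B :: "nat \<Rightarrow> nat \<Rightarrow> 'a \<Rightarrow> complex mat"
  assumes "prob_space M"
    and "lam > 1" and "\<alpha> < 0"
    and "lam + 2 * sqrt lam < - 1 / \<alpha>" and "- 1 / \<alpha> < (1 + sqrt lam)^2"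
    and "\<And>n. n \<ge> 1 \<Longrightarrow> ((\<lambda>N. real (d n N) / real (n * N)) \<longlongrightarrow> lam) sequentially"
    and "\<And>n N. n \<ge> 1 \<Longrightarrow> N \<ge> 1 \<Longrightarrow>
           complex_gaussian_matrix M (1 / real (n * N)) (d n N) (n * N) (B n N)"
  shows "\<forall>k \<ge> 1. \<exists>n0. \<forall>n \<ge> n0. AE \<omega> in M. \<exists>N0. \<forall>N \<ge> N0.
           k_block_positive n N k
             (1\<^sub>m (n * N) + complex_of_real \<alpha> \<cdot>\<^sub>m (mat_adjoint (B n N \<omega>) * B n N \<omega>))"
proof -
  interpret prob_space M by (rule assms(1))
  have lam: "0 < lam" "lam < - 1 / \<alpha>" using assms(2,4) by (smt (verit) real_sqrt_ge_zero)+
  show ?thesis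
    using eventually_AE_k_block_positive[OF assms(3) lam _ assms(6,7)] by (simp add: Suc_le_eq)
qed

end
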